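(* Let $A,B:(0,\infty)\to(0,\infty)$ be the functions $A=\tfrac r3\sqrt{1-r^{-3}}$, $B=\tfrac r{\sqrt3}$, where $r=r(t)\in(1,\infty)$ is determined by $\dot A=\tfrac12(1-A^2/B^2)$, $\dot B=A/B$ with $r\to1$ as $t\to0$. Consider the ODE system $$\dot f_+=\frac{f_+}{A}\Bigl(1-\frac{A^2}{B^2}-f_+\Bigr)+f_-^2\frac{A}{B^2},\qquad \dot f_-=\frac{2f_-}{A}(f_+-1).$$ If a solution $(f_+,f_-)$ lies in $\mathcal{R}_0=\{\tfrac23<f_+<1,\ 0<f_-<1\}$ at some time $t_0>0$, then it exists for all $t\ge t_0$ and converges to $(\tfrac23,0)$, with $$f_+=\tfrac23+\mu t^{-2}+O(t^{-3}),\qquad f_-=\nu t^{-2}+O(t^{-3})\qquad (t\to\infty)$$ for some non-zero real numbers $\mu,\nu$.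
   Context: $A$ and $B$ are the metric coefficients of the Bryant–Salamon $G_2$-metric on $\mathbf{S}(S^3)$; the system is the $\mathrm{SU}(2)^3$-invariant $G_2$-instanton equation for $\mathrm{SU}(2)$-connections $f_+\sum_iE_i\otimes e_i^++f_-\sum_iE_i\otimes e_i^-$, and $(\tfrac23,0)$ corresponds to the nearly-Kähler instanton $A^{nK}$. *)

theory Defs
  imports Complex_Main "HOL-Library.Landau_Symbols"
begin

definition fplus_rhs :: "real \<Rightarrow> real \<Rightarrow> real \<Rightarrow> real \<Rightarrow> real" where
  "fplus_rhs a b fp fm = fp / a * (1 - a\<^sup>2 / b\<^sup>2 - fp) + fm\<^sup>2 * a / b\<^sup>2"

definition fminus_rhs :: "real \<Rightarrow> real \<Rightarrow> real \<Rightarrow> real \<Rightarrow> real" where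
  "fminus_rhs a b fp fm = 2 * fm / a * (fp - 1)"

definition instanton_sol ::
  "(real \<Rightarrow> real) \<Rightarrow> (real \<Rightarrow> real) \<Rightarrow> (real \<Rightarrow> real) \<Rightarrow> (real \<Rightarrow> real) \<Rightarrow> real set \<Rightarrow> bool" where
  "instanton_sol A B fp fm I \<longleftrightarrow>
     (\<forall>t\<in>I. (fp has_real_derivative fplus_rhs (A t) (B t) (fp t) (fm t)) (at t within I) \<and>
             (fm has_real_derivative fminus_rhs (A t) (B t) (fp t) (fm t)) (at t within I))"

end

theory Submission
  imports Defs "HOL-Analysis.Henstock_Kurzweil_Integration" "HOL-Analysis.Lipschitz"
begin

text \<open>
  Write \<open>\<epsilon> = 1/3 - A\<^sup>2/B\<^sup>2\<close>; for the Bryant--Salamon metric \<open>\<epsilon> = 1/(3 r\<^sup>3)\<close>, so \<open>\<epsilon>\<close> is positive,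
  decreasing and at most \<open>1/(81 A\<^sup>3)\<close>, while \<open>A' = 1/3 + \<epsilon>/2\<close> makes \<open>A\<close> grow like \<open>t/3\<close>. The
  system reads \<open>f\<^sub>+' = (f\<^sub>+ (2/3 + \<epsilon> - f\<^sub>+) + f\<^sub>-\<^sup>2 (1/3 - \<epsilon>)) / A\<close>, \<open>f\<^sub>-' = 2 f\<^sub>- (f\<^sub>+ - 1) / A\<close>.

  Existence: clamped to the unit square the field is globally Lipschitz, so Picard iteration
  yields a solution on \<open>[t0, \<infinity>)\<close>. For a suitable \<open>q < 1\<close> the region
  \<open>2/3 < f\<^sub>+ < q, 0 < f\<^sub>- < 1\<close> is forward invariant, hence the clamping never acts.
  Uniqueness is Gronwall's inequality for the squared distance of two solutions.

  Asymptotics: put \<open>\<Phi> = A\<^sup>2 (f\<^sub>+ - 2/3)\<close> and \<open>\<Psi> = A\<^sup>2 f\<^sub>-\<close>. A bootstrap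
  (\<open>f\<^sub>- = O(A\<^sup>-\<^sup>\<beta>)\<close>, then \<open>\<Phi> = O(A\<^sup>2\<^sup>-\<^sup>2\<^sup>\<beta>)\<close>, then \<open>\<Psi>\<close> and \<open>\<Phi>\<close> bounded) gives
  \<open>\<Phi>' = O(A\<^sup>-\<^sup>2)\<close> and \<open>(ln \<Psi>)' = O(A\<^sup>-\<^sup>3)\<close>, so \<open>\<Phi> \<rightarrow> M > 0\<close> and \<open>\<Psi> \<rightarrow> N > 0\<close> with error
  \<open>O(1/A)\<close>. Since \<open>t - 3A\<close> stays bounded, \<open>f\<^sub>+ = 2/3 + 9M/t\<^sup>2 + O(t\<^sup>-\<^sup>3)\<close> and
  \<open>f\<^sub>- = 9N/t\<^sup>2 + O(t\<^sup>-\<^sup>3)\<close>.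
\<close>

section \<open>Real analysis on a half-line\<close>

lemma integral_has_vector_derivative_ray:
  fixes g :: "real \<Rightarrow> 'a::banach"
  assumes "continuous_on {a..} g" "a \<le> t"
  shows "((\<lambda>x. integral {a..x} g) has_vector_derivative g t) (at t within {a..})"
proof -
  have "((\<lambda>x. integral {a..x} g) has_vector_derivative g t) (at t within {a..t+1})"
    using assms by (intro integral_has_vector_derivative) (auto elim: continuous_on_subset)
  moreover have "at t within {a..t+1} = at t within {a..}"
    by (rule at_within_nhd[where S="{..<t+1}"]) auto
  ultimately show ?thesis by simp
qed

lemma integral_shifted_power:
  fixes a t :: real
  assumes "a \<le> t"
  shows "integral {a..t} (\<lambda>s. (s - a) ^ n) = (t - a) ^ Suc n / Suc n"
proof -
  have "((\<lambda>s. (s - a) ^ n) has_integral (t - a) ^ Suc n / Suc n - (a - a) ^ Suc n / Suc n) {a..t}"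
    apply (rule fundamental_theorem_of_calculus[OF assms])
    apply (unfold has_real_derivative_iff_has_vector_derivative[symmetric])
    apply (rule derivative_eq_intros refl | simp)+
    done
  then show ?thesis by (simp add: integral_unique)
qed

lemma has_vector_derivative_Pair_iff:
  fixes f g :: "real \<Rightarrow> real"
  shows "((\<lambda>t. (f t, g t)) has_vector_derivative (f', g')) (at x within S) \<longleftrightarrow>
    (f has_real_derivative f') (at x within S) \<and> (g has_real_derivative g') (at x within S)"
proof
  assume "((\<lambda>t. (f t, g t)) has_vector_derivative (f', g')) (at x within S)"
  then have d: "((\<lambda>t. (f t, g t)) has_derivative (\<lambda>h. h *\<^sub>R (f', g'))) (at x within S)"
    by (simp add: has_vector_derivative_def)
  from has_derivative_fst[OF d] has_derivative_snd[OF d] show "(f has_real_derivative f') (at x within S) \<and> (g has_real_derivative g') (at x within S)"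
    by (simp add: has_field_derivative_def mult_commute_abs)
qed (auto simp: has_real_derivative_iff_has_vector_derivative intro: has_vector_derivative_Pair)

lemma DERIV_ge_mult_imp_exp_lower_bound:
  fixes f f' :: "real \<Rightarrow> real"
  assumes "a \<le> b" "continuous_on {a..b} f"
    and "\<And>x. a < x \<Longrightarrow> x < b \<Longrightarrow> (f has_real_derivative f' x) (at x)"
    and "\<And>x. a < x \<Longrightarrow> x < b \<Longrightarrow> K * f x \<le> f' x"
  shows "f a * exp (K * (b - a)) \<le> f b"
proof -
  have "(\<lambda>x. f x * exp (- K * x)) a \<le> (\<lambda>x. f x * exp (- K * x)) b"
  proof (rule DERIV_nonneg_imp_increasing_open[OF assms(1)])
    fix x assume x: "a < x" "x < b"
    have "((\<lambda>x. f x * exp (- K * x)) has_real_derivative exp (- K * x) * (f' x - K * f x)) (at x)"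
      using assms(3)[OF x] by (auto intro!: derivative_eq_intros simp: algebra_simps)
    moreover have "0 \<le> exp (- K * x) * (f' x - K * f x)"
      using assms(4)[OF x] by simp
    ultimately show "\<exists>y. ((\<lambda>x. f x * exp (- K * x)) has_real_derivative y) (at x) \<and> 0 \<le> y"
      by blast
  qed (intro continuous_intros assms(2))
  then have "f a * exp (- K * a) * exp (K * b) \<le> f b * exp (- K * b) * exp (K * b)"
    by simp
  then show ?thesis by (simp add: mult.assoc exp_add[symmetric] algebra_simps)
qed

lemma DERIV_ge_mult_imp_pos:
  fixes f f' :: "real \<Rightarrow> real"
  assumes "a \<le> b" "continuous_on {a..b} f"
    and "\<And>x. a < x \<Longrightarrow> x < b \<Longrightarrow> (f has_real_derivative f' x) (at x)"
    and "\<And>x. a < x \<Longrightarrow> x < b \<Longrightarrow> K * f x \<le> f' x"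
    and "0 < f a"
  shows "0 < f b"
proof -
  have "0 < f a * exp (K * (b - a))" using \<open>0 < f a\<close> by simp
  then show ?thesis using DERIV_ge_mult_imp_exp_lower_bound[OF assms(1-4)] by linarith
qed

lemma DERIV_nonpos_imp_antimono_ray:
  fixes f f' :: "real \<Rightarrow> real"
  assumes "\<And>x. a \<le> x \<Longrightarrow> (f has_real_derivative f' x) (at x)" "\<And>x. a \<le> x \<Longrightarrow> f' x \<le> 0"
    and "a \<le> s" "s \<le> t"
  shows "f t \<le> f s"
proof (rule DERIV_nonpos_imp_nonincreasing[OF \<open>s \<le> t\<close>])
  fix x assume "s \<le> x" "x \<le> t"
  then show "\<exists>y. (f has_real_derivative y) (at x) \<and> y \<le> 0"
    using assms(1,2)[of x] \<open>a \<le> s\<close> by (intro exI[of _ "f' x"]) simp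
qed

lemma DERIV_nonneg_imp_mono_ray:
  fixes f f' :: "real \<Rightarrow> real"
  assumes "\<And>x. a \<le> x \<Longrightarrow> (f has_real_derivative f' x) (at x)" "\<And>x. a \<le> x \<Longrightarrow> 0 \<le> f' x"
    and "a \<le> s" "s \<le> t"
  shows "f s \<le> f t"
proof (rule DERIV_nonneg_imp_nondecreasing[OF \<open>s \<le> t\<close>])
  fix x assume "s \<le> x" "x \<le> t"
  then show "\<exists>y. (f has_real_derivative y) (at x) \<and> 0 \<le> y"
    using assms(1,2)[of x] \<open>a \<le> s\<close> by (intro exI[of _ "f' x"]) simp
qed

lemma mono_antimono_sandwich:
  fixes h g :: "real \<Rightarrow> real"
  assumes h: "\<And>s t. a \<le> s \<Longrightarrow> s \<le> t \<Longrightarrow> h s \<le> h t"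
    and g: "\<And>s t. a \<le> s \<Longrightarrow> s \<le> t \<Longrightarrow> g t \<le> g s"
    and hg: "\<And>t. a \<le> t \<Longrightarrow> h t \<le> g t"
  obtains c where "\<And>t. a \<le> t \<Longrightarrow> h t \<le> c \<and> c \<le> g t"
proof
  have bdd: "bdd_above (h ` {a..})"
    by (rule bdd_aboveI[of _ "g a"]) (use hg g in force)
  fix t assume t: "a \<le> t"
  show "h t \<le> (SUP s\<in>{a..}. h s) \<and> (SUP s\<in>{a..}. h s) \<le> g t"
  proof
    show "h t \<le> (SUP s\<in>{a..}. h s)" by (rule cSUP_upper) (use t bdd in auto)
    have "h s \<le> g t" if "a \<le> s" for s
    proof (cases "s \<le> t")
      case True then show ?thesis using h[of s t] hg[OF t] that by force
    next
      case False then show ?thesis using hg[OF that] g[of t s] t by force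
    qed
    then show "(SUP s\<in>{a..}. h s) \<le> g t" by (intro cSUP_least) auto
  qed
qed

lemma pos_on_ray_by_continuity:
  fixes g :: "real \<Rightarrow> real"
  assumes cont: "continuous_on {a..} g" and start: "g a > 0"
    and step: "\<And>b. a < b \<Longrightarrow> (\<And>s. a \<le> s \<Longrightarrow> s < b \<Longrightarrow> g s > 0) \<Longrightarrow> g b > 0"
    and "a \<le> t"
  shows "g t > 0"
proof (rule ccontr)
  assume "\<not> g t > 0"
  define S where "S = {a..t} \<inter> g -` {..0}"
  have "closed S"
    unfolding S_def by (rule continuous_closed_preimage) (auto intro: continuous_on_subset[OF cont])
  moreover have "t \<in> S" "bdd_below S"
    using \<open>\<not> g t > 0\<close> \<open>a \<le> t\<close> by (auto simp: S_def)
  ultimately have "Inf S \<in> S" using closed_contains_Inf by blast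
  then have b: "a \<le> Inf S" "g (Inf S) \<le> 0" by (auto simp: S_def)
  then have "a < Inf S" using start by (cases "a = Inf S") auto
  moreover have "g s > 0" if "a \<le> s" "s < Inf S" for s
  proof (rule ccontr)
    assume "\<not> g s > 0"
    with that b have "s \<in> S" by (auto simp: S_def intro: order_trans[OF _ cInf_lower[OF \<open>t \<in> S\<close>]])
    then have "Inf S \<le> s" using \<open>bdd_below S\<close> by (rule cInf_lower)
    then show False using that by simp
  qed
  ultimately have "g (Inf S) > 0" by (rule step)
  then show False using b by simp
qed

lemma abs_exp_sub_exp_le:
  fixes y z :: real
  shows "\<bar>exp y - exp z\<bar> \<le> exp (max y z) * \<bar>y - z\<bar>"
proof -
  have *: "exp b - exp a \<le> exp b * (b - a)" if "a \<le> b" for a b :: real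
  proof -
    have "exp b * (1 + (a - b)) \<le> exp b * exp (a - b)"
      by (intro mult_left_mono exp_ge_add_one_self) simp
    then show ?thesis by (simp add: exp_diff algebra_simps)
  qed
  show ?thesis
  proof (cases "z \<le> y")
    case True then show ?thesis using *[OF True] by (simp add: max_def)
  next
    case False then show ?thesis using *[of y z] by (simp add: max_def abs_minus_commute)
  qed
qed

section \<open>Existence and uniqueness for ordinary differential equations\<close>

locale picard_iteration =
  fixes G :: "real \<Rightarrow> 'a::banach \<Rightarrow> 'a" and a :: real and y0 :: 'a and M L :: real
  assumes G_continuous: "continuous_on ({a..} \<times> UNIV) (\<lambda>(t, y). G t y)"
    and G_bounded: "\<And>t y. a \<le> t \<Longrightarrow> norm (G t y) \<le> M"
    and G_lipschitz: "\<And>t. a \<le> t \<Longrightarrow> L-lipschitz_on UNIV (G t)"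
begin

lemma M_nonneg: "0 \<le> M"
  using G_bounded[of a y0] norm_ge_zero order_trans by blast

lemma L_nonneg: "0 \<le> L"
  using G_lipschitz[of a] by (auto intro: lipschitz_on_nonneg)

lemma G_lipschitz_norm: "a \<le> t \<Longrightarrow> norm (G t y - G t z) \<le> L * norm (y - z)"
  using G_lipschitz by (auto intro: lipschitz_on_normD)

lemma continuous_on_G_comp:
  assumes "continuous_on S y" "S \<subseteq> {a..}"
  shows "continuous_on S (\<lambda>s. G s (y s))"
proof -
  have "continuous_on S (\<lambda>s. (s, y s))" by (intro continuous_intros assms)
  moreover have "(\<lambda>s. (s, y s)) ` S \<subseteq> {a..} \<times> UNIV" using assms(2) by auto
  ultimately show ?thesis
    using continuous_on_compose2[OF G_continuous] by fastforce
qed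

primrec iterate :: "nat \<Rightarrow> real \<Rightarrow> 'a" where
  "iterate 0 = (\<lambda>_. y0)"
| "iterate (Suc n) = (\<lambda>t. y0 + integral {a..t} (\<lambda>s. G s (iterate n s)))"

lemma iterate_at_start: "iterate n a = y0"
  by (cases n) simp_all

lemma lipschitz_on_iterate: "M-lipschitz_on {a..} (iterate n)"
proof (induction n)
  case 0
  show ?case using M_nonneg by (simp add: lipschitz_on_constant[THEN lipschitz_on_le])
next
  case (Suc n)
  have cont: "continuous_on {a..} (\<lambda>s. G s (iterate n s))"
    using Suc.IH by (intro continuous_on_G_comp lipschitz_on_continuous_on) auto
  show ?case
  proof (rule lipschitz_on_leI[OF _ M_nonneg])
    fix s t assume st: "s \<in> {a..}" "t \<in> {a..}" "s \<le> t"
    have "integral {a..s} (\<lambda>x. G x (iterate n x)) + integral {s..t} (\<lambda>x. G x (iterate n x))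
        = integral {a..t} (\<lambda>x. G x (iterate n x))"
      by (rule integral_combine) (use st in \<open>auto intro!: integrable_continuous_real continuous_on_subset[OF cont]\<close>)
    then have "iterate (Suc n) t - iterate (Suc n) s = integral {s..t} (\<lambda>x. G x (iterate n x))"
      by (simp add: algebra_simps)
    also have "norm \<dots> \<le> M * (t - s)"
      using st G_bounded by (intro integral_bound continuous_on_subset[OF cont]) auto
    finally show "dist (iterate (Suc n) s) (iterate (Suc n) t) \<le> M * dist s t"
      using st by (simp add: dist_norm norm_minus_commute dist_real_def)
  qed
qed

lemma continuous_on_iterate: "continuous_on {a..} (\<lambda>s. G s (iterate n s))"
  by (intro continuous_on_G_comp lipschitz_on_continuous_on[OF lipschitz_on_iterate]) auto

definition majorant :: "nat \<Rightarrow> real \<Rightarrow> real" where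
  "majorant n t = M * L ^ n * (t - a) ^ Suc n / fact (Suc n)"

lemma iterate_step_bound:
  "a \<le> t \<Longrightarrow> norm (iterate (Suc n) t - iterate n t) \<le> majorant n t"
proof (induction n arbitrary: t)
  case 0
  have "continuous_on {a..t} (\<lambda>s. G s y0)"
    using continuous_on_iterate[of 0] by (auto elim: continuous_on_subset)
  then show ?case
    using 0 G_bounded by (auto simp: majorant_def intro!: integral_bound)
next
  case (Suc n)
  let ?g = "\<lambda>s. G s (iterate (Suc n) s) - G s (iterate n s)"
  have cont: "continuous_on {a..t} ?g"
    by (intro continuous_intros continuous_on_subset[OF continuous_on_iterate]) auto
  have "iterate (Suc (Suc n)) t - iterate (Suc n) t
      = integral {a..t} (\<lambda>s. G s (iterate (Suc n) s)) - integral {a..t} (\<lambda>s. G s (iterate n s))"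
    by simp
  also have "\<dots> = integral {a..t} ?g"
    by (rule integral_diff[symmetric])
      (intro integrable_continuous_real continuous_on_subset[OF continuous_on_iterate]; auto)+
  finally have "norm (iterate (Suc (Suc n)) t - iterate (Suc n) t) = norm (integral {a..t} ?g)"
    by simp
  also have "\<dots> \<le> integral {a..t} (\<lambda>s. L * majorant n s)"
  proof (rule integral_norm_bound_integral)
    show "?g integrable_on {a..t}" using cont by (rule integrable_continuous_real)
    show "(\<lambda>s. L * majorant n s) integrable_on {a..t}"
      unfolding majorant_def by (intro integrable_continuous_real continuous_intros) simp
    fix s assume s: "s \<in> {a..t}"
    have "norm (?g s) \<le> L * norm (iterate (Suc n) s - iterate n s)"
      using s by (intro G_lipschitz_norm) auto
    also have "\<dots> \<le> L * majorant n s"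
      using s Suc.IH[of s] L_nonneg by (intro mult_left_mono) auto
    finally show "norm (?g s) \<le> L * majorant n s" .
  qed
  also have "\<dots> = majorant (Suc n) t"
    using integral_shifted_power[OF Suc.prems, of "Suc n"]
    by (simp add: majorant_def divide_simps del: of_nat_Suc)
  finally show ?case .
qed

lemma summable_majorant:
  assumes "a \<le> T"
  shows "summable (\<lambda>n. majorant n T)"
proof (rule summable_comparison_test)
  show "summable (\<lambda>n. M * (T - a) * (inverse (fact n) * (L * (T - a)) ^ n))"
    by (intro summable_mult summable_exp)
  have "majorant n T \<le> M * (T - a) * (inverse (fact n) * (L * (T - a)) ^ n)" for n
  proof -
    have "majorant n T = M * (T - a) * ((L * (T - a)) ^ n / fact (Suc n))"
      unfolding majorant_def by (simp only: power_mult_distrib power_Suc) (simp add: mult_ac)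
    also have "\<dots> \<le> M * (T - a) * ((L * (T - a)) ^ n / fact n)"
      using assms M_nonneg L_nonneg by (intro mult_left_mono divide_left_mono) (auto simp: fact_mono)
    finally show ?thesis by (simp add: field_simps)
  qed
  moreover have "0 \<le> majorant n T" for n
    using assms M_nonneg L_nonneg by (simp add: majorant_def)
  ultimately show "\<exists>N. \<forall>n\<ge>N. norm (majorant n T) \<le> M * (T - a) * (inverse (fact n) * (L * (T - a)) ^ n)"
    by simp
qed

definition tail :: "nat \<Rightarrow> real \<Rightarrow> real" where
  "tail n T = (\<Sum>k. majorant k T) - (\<Sum>k<n. majorant k T)"

lemma tail_tendsto_zero:
  assumes "a \<le> T"
  shows "(\<lambda>n. tail n T) \<longlonglongrightarrow> 0"
proof -
  have "(\<lambda>n. tail n T) \<longlonglongrightarrow> (\<Sum>k. majorant k T) - (\<Sum>k. majorant k T)"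
    unfolding tail_def by (intro tendsto_diff tendsto_const summable_LIMSEQ summable_majorant assms)
  then show ?thesis by simp
qed

lemma iterate_cauchy_bound:
  assumes "a \<le> s" "s \<le> T" "n \<le> m"
  shows "norm (iterate m s - iterate n s) \<le> tail n T"
proof -
  have majorant_mono: "majorant k s \<le> majorant k T" for k
    unfolding majorant_def using assms M_nonneg L_nonneg
    by (intro divide_right_mono mult_left_mono power_mono) auto
  have "norm (iterate m s - iterate n s) \<le> (\<Sum>k\<in>{n..<m}. majorant k T)"
    using \<open>n \<le> m\<close>
  proof (induction m rule: dec_induct)
    case (step m)
    have "norm (iterate (Suc m) s - iterate n s) \<le> majorant m T + (\<Sum>k\<in>{n..<m}. majorant k T)"
      using order_trans[OF iterate_step_bound[OF assms(1)] majorant_mono] step.IH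
      by (rule norm_diff_triangle_le)
    then show ?case using step.hyps by simp
  qed simp
  also have "\<dots> \<le> tail n T"
  proof -
    have "(\<Sum>k<n. majorant k T) + (\<Sum>k\<in>{n..<m}. majorant k T) = (\<Sum>k<m. majorant k T)"
      using sum.atLeastLessThan_concat[of 0 n m "\<lambda>k. majorant k T"] \<open>n \<le> m\<close>
      by (simp add: atLeast0LessThan)
    moreover have "(\<Sum>k<m. majorant k T) \<le> (\<Sum>k. majorant k T)"
      using assms M_nonneg L_nonneg
      by (intro sum_le_suminf summable_majorant) (auto simp: majorant_def)
    ultimately show ?thesis unfolding tail_def by linarith
  qed
  finally show ?thesis .
qed

definition solution :: "real \<Rightarrow> 'a" where
  "solution t = lim (\<lambda>n. iterate n t)"

lemma iterate_tendsto_solution: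
  assumes "a \<le> t"
  shows "(\<lambda>n. iterate n t) \<longlonglongrightarrow> solution t"
proof -
  have "Cauchy (\<lambda>n. iterate n t)"
  proof (rule metric_CauchyI)
    fix e :: real assume "0 < e"
    then obtain N where N: "\<bar>tail N t\<bar> < e / 2"
      using tail_tendsto_zero[OF assms] unfolding LIMSEQ_def dist_real_def
      by (metis half_gt_zero diff_zero order_refl)
    have "dist (iterate m t) (iterate n t) < e" if "N \<le> m" "N \<le> n" for m n
      using iterate_cauchy_bound[OF assms order_refl that(1)]
        iterate_cauchy_bound[OF assms order_refl that(2)] N
        dist_triangle2[of "iterate m t" "iterate n t" "iterate N t"]
      by (simp add: dist_norm)
    then show "\<exists>N. \<forall>m\<ge>N. \<forall>n\<ge>N. dist (iterate m t) (iterate n t) < e"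
      by blast
  qed
  then show ?thesis
    by (simp add: solution_def Cauchy_convergent_iff convergent_LIMSEQ_iff)
qed

lemma solution_error:
  assumes "a \<le> s" "s \<le> T"
  shows "norm (solution s - iterate n s) \<le> tail n T"
proof (rule tendsto_upperbound)
  show "((\<lambda>m. norm (iterate m s - iterate n s)) \<longlongrightarrow> norm (solution s - iterate n s)) sequentially"
    by (intro tendsto_intros iterate_tendsto_solution assms)
  show "\<forall>\<^sub>F m in sequentially. norm (iterate m s - iterate n s) \<le> tail n T"
    using eventually_ge_at_top[of n] by eventually_elim (rule iterate_cauchy_bound[OF assms])
qed simp

lemma solution_at_start: "solution a = y0"
  using iterate_tendsto_solution[of a] by (simp add: iterate_at_start LIMSEQ_const_iff)

lemma lipschitz_on_solution: "M-lipschitz_on {a..} solution"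
proof (rule lipschitz_onI[OF _ M_nonneg])
  fix s t assume st: "s \<in> {a..}" "t \<in> {a..}"
  show "dist (solution s) (solution t) \<le> M * dist s t"
  proof (rule tendsto_upperbound)
    show "((\<lambda>n. dist (iterate n s) (iterate n t)) \<longlongrightarrow> dist (solution s) (solution t)) sequentially"
      using st by (intro tendsto_intros iterate_tendsto_solution) auto
    show "\<forall>\<^sub>F n in sequentially. dist (iterate n s) (iterate n t) \<le> M * dist s t"
      using st by (intro always_eventually allI lipschitz_onD[OF lipschitz_on_iterate])
  qed simp
qed

lemma continuous_on_solution: "continuous_on {a..} (\<lambda>s. G s (solution s))"
  by (intro continuous_on_G_comp lipschitz_on_continuous_on[OF lipschitz_on_solution]) auto

lemma solution_integral_equation:
  assumes "a \<le> t"
  shows "solution t = y0 + integral {a..t} (\<lambda>s. G s (solution s))"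
proof -
  let ?err = "\<lambda>n. tail (Suc n) t + L * tail n t * (t - a)"
  have "norm (solution t - y0 - integral {a..t} (\<lambda>s. G s (solution s))) \<le> ?err n" for n
  proof -
    let ?g = "\<lambda>s. G s (iterate n s) - G s (solution s)"
    have "solution t - y0 - integral {a..t} (\<lambda>s. G s (solution s))
        = (solution t - iterate (Suc n) t) + integral {a..t} ?g"
      using continuous_on_iterate[of n] continuous_on_solution
      by (simp add: integral_diff integrable_continuous_real continuous_on_subset)
    also have "norm \<dots> \<le> tail (Suc n) t + L * tail n t * (t - a)"
    proof (rule norm_triangle_le[OF add_mono])
      show "norm (solution t - iterate (Suc n) t) \<le> tail (Suc n) t"
        using assms by (rule solution_error) simp
      have "norm (?g s) \<le> L * tail n t" if "s \<in> {a..t}" for s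
      proof -
        have "norm (?g s) \<le> L * norm (solution s - iterate n s)"
          using that G_lipschitz_norm[of s] by (simp add: norm_minus_commute)
        also have "\<dots> \<le> L * tail n t"
          using that solution_error[of s t n] L_nonneg by (intro mult_left_mono) auto
        finally show ?thesis .
      qed
      then show "norm (integral {a..t} ?g) \<le> L * tail n t * (t - a)"
        using assms continuous_on_iterate[of n] continuous_on_solution
        by (intro integral_bound continuous_intros) (auto intro: continuous_on_subset)
    qed
    finally show ?thesis .
  qed
  moreover have "?err \<longlonglongrightarrow> 0 + L * 0 * (t - a)"
    using assms by (intro tendsto_intros tail_tendsto_zero LIMSEQ_Suc)
  ultimately have "norm (solution t - y0 - integral {a..t} (\<lambda>s. G s (solution s))) \<le> 0"
    by (intro tendsto_lowerbound[where f="?err"]) auto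
  then show ?thesis by (simp add: algebra_simps)
qed

lemma solution_has_vector_derivative:
  assumes "a \<le> t"
  shows "(solution has_vector_derivative G t (solution t)) (at t within {a..})"
proof -
  have "((\<lambda>x. y0 + integral {a..x} (\<lambda>s. G s (solution s))) has_vector_derivative G t (solution t))
      (at t within {a..})"
    using integral_has_vector_derivative_ray[OF continuous_on_solution assms]
    by (auto intro!: derivative_eq_intros)
  then show ?thesis
    by (rule has_vector_derivative_transform_within[where d=1])
      (use assms solution_integral_equation in auto)
qed

end

theorem picard_existence_ray:
  fixes G :: "real \<Rightarrow> 'a::banach \<Rightarrow> 'a"
  assumes "continuous_on ({a..} \<times> UNIV) (\<lambda>(t, y). G t y)"
    and "\<And>t y. a \<le> t \<Longrightarrow> norm (G t y) \<le> M"
    and "\<And>t. a \<le> t \<Longrightarrow> L-lipschitz_on UNIV (G t)"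
  obtains y where "y a = y0" "\<And>t. a \<le> t \<Longrightarrow> (y has_vector_derivative G t (y t)) (at t within {a..})"
proof -
  interpret picard_iteration G a y0 M L
    using assms by unfold_locales
  show ?thesis
    using that solution_at_start solution_has_vector_derivative by blast
qed

corollary picard_existence_clamped:
  fixes F :: "real \<Rightarrow> 'a::euclidean_space \<Rightarrow> 'a"
  assumes box: "\<And>i. i \<in> Basis \<Longrightarrow> lo \<bullet> i \<le> hi \<bullet> i"
    and cont: "continuous_on ({a..} \<times> cbox lo hi) (\<lambda>(t, y). F t y)"
    and bnd: "\<And>t y. a \<le> t \<Longrightarrow> y \<in> cbox lo hi \<Longrightarrow> norm (F t y) \<le> M"
    and lip: "\<And>t. a \<le> t \<Longrightarrow> L-lipschitz_on (cbox lo hi) (F t)"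
  obtains y where "y a = y0"
    "\<And>t. a \<le> t \<Longrightarrow> (y has_vector_derivative F t (clamp lo hi (y t))) (at t within {a..})"
proof -
  have "continuous_on UNIV (\<lambda>y. clamp lo hi y)"
    using clamp_continuous_on[of lo hi "\<lambda>x. x"] by simp
  then have "continuous_on ({a..} \<times> UNIV) (\<lambda>z. clamp lo hi (snd z))"
    by (rule continuous_on_compose2[OF _ continuous_on_snd]) auto
  then have "continuous_on ({a..} \<times> UNIV) (\<lambda>z. (fst z, clamp lo hi (snd z)))"
    by (intro continuous_intros)
  moreover have "(\<lambda>z. (fst z, clamp lo hi (snd z))) ` ({a..} \<times> UNIV) \<subseteq> {a..} \<times> cbox lo hi"
    using box by auto
  ultimately have "continuous_on ({a..} \<times> UNIV) (\<lambda>(t, y). F t (clamp lo hi y))"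
    using continuous_on_compose2[OF cont, of "{a..} \<times> UNIV" "\<lambda>z. (fst z, clamp lo hi (snd z))"]
    by (simp add: case_prod_beta')
  moreover have "norm (F t (clamp lo hi y)) \<le> M" if "a \<le> t" for t y
    using that box by (intro bnd) auto
  moreover have "L-lipschitz_on UNIV (\<lambda>y. F t (clamp lo hi y))" if "a \<le> t" for t
  proof (rule lipschitz_onI)
    show L: "0 \<le> L" using lip[OF that] by (rule lipschitz_on_nonneg)
    fix y z :: 'a
    have "dist (F t (clamp lo hi y)) (F t (clamp lo hi z)) \<le> L * dist (clamp lo hi y) (clamp lo hi z)"
      using box by (intro lipschitz_onD[OF lip[OF that]]) auto
    also have "\<dots> \<le> L * dist y z"
      using L by (intro mult_left_mono dist_clamps_le_dist_args)
    finally show "dist (F t (clamp lo hi y)) (F t (clamp lo hi z)) \<le> L * dist y z" .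
  qed
  ultimately show ?thesis
    using picard_existence_ray[where G="\<lambda>t y. F t (clamp lo hi y)"] that by blast
qed

lemma has_real_derivative_inner_self:
  fixes w :: "real \<Rightarrow> 'a::real_inner"
  assumes "(w has_vector_derivative w') (at t)"
  shows "((\<lambda>t. inner (w t) (w t)) has_real_derivative 2 * inner (w t) w') (at t)"
proof -
  have "((\<lambda>t. inner (w t) (w t)) has_derivative (\<lambda>h. inner (w t) (h *\<^sub>R w') + inner (h *\<^sub>R w') (w t))) (at t)"
    using assms unfolding has_vector_derivative_def by (intro derivative_intros)
  then show ?thesis
    unfolding has_field_derivative_def
    by (rule has_derivative_eq_rhs) (auto simp: fun_eq_iff inner_commute algebra_simps)
qed

theorem ode_solution_unique:
  fixes F :: "real \<Rightarrow> 'a::real_inner \<Rightarrow> 'a" and y z :: "real \<Rightarrow> 'a"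
  assumes "a \<le> b"
    and y: "\<And>t. t \<in> {a..b} \<Longrightarrow> (y has_vector_derivative F t (y t)) (at t within {a..b})"
    and z: "\<And>t. t \<in> {a..b} \<Longrightarrow> (z has_vector_derivative F t (z t)) (at t within {a..b})"
    and start: "y a = z a"
    and lip: "\<And>R. \<exists>L. \<forall>t\<in>{a..b}. L-lipschitz_on (cball 0 R) (F t)"
  shows "y b = z b"
proof -
  have cont: "continuous_on {a..b} y" "continuous_on {a..b} z"
    unfolding continuous_on_eq_continuous_within
    using has_vector_derivative_continuous[OF y] has_vector_derivative_continuous[OF z] by blast+
  obtain R where R: "\<And>t. t \<in> {a..b} \<Longrightarrow> y t \<in> cball 0 R \<and> z t \<in> cball 0 R"
  proof -
    have "bounded (y ` {a..b} \<union> z ` {a..b})"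
      using compact_continuous_image[OF cont(1) compact_Icc] compact_continuous_image[OF cont(2) compact_Icc]
      by (intro compact_imp_bounded compact_Un)
    then obtain R where "\<forall>x \<in> y ` {a..b} \<union> z ` {a..b}. norm x \<le> R"
      by (auto simp: bounded_iff)
    then show ?thesis by (intro that[of R]) auto
  qed
  obtain L where L: "\<And>t. t \<in> {a..b} \<Longrightarrow> L-lipschitz_on (cball 0 R) (F t)"
    using lip by blast
  have L_nonneg: "0 \<le> L" using L[of a] \<open>a \<le> b\<close> lipschitz_on_nonneg by auto
  define d where "d t = - inner (y t - z t) (y t - z t)" for t
  have "d a * exp (2 * L * (b - a)) \<le> d b"
  proof (rule DERIV_ge_mult_imp_exp_lower_bound[OF \<open>a \<le> b\<close>])
    show "continuous_on {a..b} d" unfolding d_def by (intro continuous_intros cont)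
    fix t assume t: "a < t" "t < b"
    then have "at t within {a..b} = at t" by (intro at_within_interior) simp
    then have "(y has_vector_derivative F t (y t)) (at t)" "(z has_vector_derivative F t (z t)) (at t)"
      using y[of t] z[of t] t by auto
    from has_real_derivative_inner_self[OF has_vector_derivative_diff[OF this]]
    show "(d has_real_derivative - 2 * inner (y t - z t) (F t (y t) - F t (z t))) (at t)"
      unfolding d_def by (auto intro!: derivative_eq_intros)
    have "inner (y t - z t) (F t (y t) - F t (z t)) \<le> norm (y t - z t) * norm (F t (y t) - F t (z t))"
      by (rule norm_cauchy_schwarz)
    also have "\<dots> \<le> norm (y t - z t) * (L * norm (y t - z t))"
      using t R[of t] by (intro mult_left_mono lipschitz_on_normD[OF L]) auto
    finally show "2 * L * d t \<le> - 2 * inner (y t - z t) (F t (y t) - F t (z t))"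
      by (simp add: d_def power2_norm_eq_inner[symmetric] power2_eq_square algebra_simps)
  qed
  then have "inner (y b - z b) (y b - z b) \<le> 0"
    using start by (simp add: d_def)
  then show ?thesis
    using inner_ge_zero[of "y b - z b"] by simp
qed

section \<open>The instanton system and its trapping region\<close>

lemma exists_trapping_level:
  fixes p m e :: real
  assumes "p < 1" "\<bar>m\<bar> < 1" "e < 1/3"
  obtains q where "p < q" "q < 1" "m\<^sup>2 < q" "q * (2/3 + e - q) + m\<^sup>2 * (1/3 - e) < 0"
proof -
  let ?Q = "\<lambda>q. q * (2/3 + e - q) + m\<^sup>2 * (1/3 - e)"
  have "m\<^sup>2 < 1" using assms(2) by (simp add: abs_square_less_1)
  have "?Q 1 = - ((1/3 - e) * (1 - m\<^sup>2))"
    by (simp add: algebra_simps)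
  also have "\<dots> < 0"
    using \<open>m\<^sup>2 < 1\<close> assms(3) by simp
  finally have "?Q 1 < 0" .
  moreover have "(?Q \<longlongrightarrow> ?Q 1) (at_left 1)"
    by (intro tendsto_intros)
  ultimately have "\<forall>\<^sub>F q in at_left 1. ?Q q < 0"
    using order_tendstoD(2) by blast
  moreover have "\<forall>\<^sub>F q in at_left 1. q \<in> {max p (m\<^sup>2)<..<1}"
    using \<open>p < 1\<close> \<open>m\<^sup>2 < 1\<close> by (intro eventually_at_left_real) simp
  ultimately have "\<forall>\<^sub>F q in at_left (1::real). ?Q q < 0 \<and> max p (m\<^sup>2) < q \<and> q < 1"
    by eventually_elim simp
  then obtain q where "?Q q < 0 \<and> max p (m\<^sup>2) < q \<and> q < 1"
    using eventually_happens'[OF trivial_limit_at_left_real] by blast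
  then show ?thesis using that by auto
qed

lemma plus_polynomial_lipschitz:
  fixes u v u' v' e R :: real
  assumes "\<bar>u\<bar> \<le> R" "\<bar>v\<bar> \<le> R" "\<bar>u'\<bar> \<le> R" "\<bar>v'\<bar> \<le> R" "0 < e" "e < 1/3"
  shows "\<bar>(u * (2/3 + e - u) + v\<^sup>2 * (1/3 - e)) - (u' * (2/3 + e - u') + v'\<^sup>2 * (1/3 - e))\<bar>
    \<le> 2 * (R + 1) * (\<bar>u - u'\<bar> + \<bar>v - v'\<bar>)"
proof -
  have "(u * (2/3 + e - u) + v\<^sup>2 * (1/3 - e)) - (u' * (2/3 + e - u') + v'\<^sup>2 * (1/3 - e))
      = (u - u') * (2/3 + e - u - u') + (v - v') * ((v + v') * (1/3 - e))"
    by algebra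
  also have "\<bar>\<dots>\<bar> \<le> \<bar>u - u'\<bar> * (2 * (R + 1)) + \<bar>v - v'\<bar> * (2 * (R + 1))"
  proof (rule order_trans[OF abs_triangle_ineq add_mono])
    show "\<bar>(u - u') * (2/3 + e - u - u')\<bar> \<le> \<bar>u - u'\<bar> * (2 * (R + 1))"
      unfolding abs_mult using assms by (intro mult_left_mono) auto
    have "\<bar>(v + v') * (1/3 - e)\<bar> \<le> 2 * R * 1"
      unfolding abs_mult using assms by (intro mult_mono) auto
    then show "\<bar>(v - v') * ((v + v') * (1/3 - e))\<bar> \<le> \<bar>v - v'\<bar> * (2 * (R + 1))"
      unfolding abs_mult[of "v - v'"] by (intro mult_left_mono) auto
  qed
  finally show ?thesis by (simp add: distrib_left mult.commute)
qed

lemma minus_polynomial_lipschitz: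
  fixes u v u' v' R :: real
  assumes "\<bar>u\<bar> \<le> R" "\<bar>v'\<bar> \<le> R"
  shows "\<bar>v * (u - 1) - v' * (u' - 1)\<bar> \<le> (R + 1) * (\<bar>u - u'\<bar> + \<bar>v - v'\<bar>)"
proof -
  have "v * (u - 1) - v' * (u' - 1) = (v - v') * (u - 1) + v' * (u - u')"
    by (simp add: algebra_simps)
  also have "\<bar>\<dots>\<bar> \<le> \<bar>v - v'\<bar> * (R + 1) + (R + 1) * \<bar>u - u'\<bar>"
  proof (rule order_trans[OF abs_triangle_ineq add_mono])
    show "\<bar>(v - v') * (u - 1)\<bar> \<le> \<bar>v - v'\<bar> * (R + 1)"
      unfolding abs_mult using assms by (intro mult_left_mono) auto
    show "\<bar>v' * (u - u')\<bar> \<le> (R + 1) * \<bar>u - u'\<bar>"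
      unfolding abs_mult using assms by (intro mult_right_mono) auto
  qed
  finally show ?thesis by (simp add: algebra_simps)
qed

lemma cbox_unit_square: "cbox (0 :: real \<times> real) (1, 1) = {0..1} \<times> {0..1}"
  by (simp add: zero_prod_def cbox_Pair_eq)

text \<open>The locale abstracts the coefficients: \<open>\<epsilon>\<close> plays the role of \<open>1/3 - A\<^sup>2/B\<^sup>2\<close>, in terms of
  which \<open>rhs_plus\<close> and \<open>rhs_minus\<close> below are \<open>fplus_rhs\<close> and \<open>fminus_rhs\<close>.\<close>

locale instanton_coefficients =
  fixes A \<epsilon> :: "real \<Rightarrow> real"
  assumes A_pos: "\<And>t. 0 < t \<Longrightarrow> 0 < A t"
    and A_deriv: "\<And>t. 0 < t \<Longrightarrow> (A has_real_derivative 1/3 + \<epsilon> t / 2) (at t)"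
    and \<epsilon>_pos: "\<And>t. 0 < t \<Longrightarrow> 0 < \<epsilon> t"
    and \<epsilon>_less: "\<And>t. 0 < t \<Longrightarrow> \<epsilon> t < 1/3"
    and \<epsilon>_le_A: "\<And>t. 0 < t \<Longrightarrow> \<epsilon> t \<le> 1 / (81 * A t ^ 3)"
    and \<epsilon>_antimono: "\<And>s t. 0 < s \<Longrightarrow> s \<le> t \<Longrightarrow> \<epsilon> t \<le> \<epsilon> s"
    and \<epsilon>_continuous: "continuous_on {0<..} \<epsilon>"
begin

definition rhs_plus :: "real \<Rightarrow> real \<Rightarrow> real \<Rightarrow> real" where
  "rhs_plus t u v = (u * (2/3 + \<epsilon> t - u) + v\<^sup>2 * (1/3 - \<epsilon> t)) / A t"

definition rhs_minus :: "real \<Rightarrow> real \<Rightarrow> real \<Rightarrow> real" where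
  "rhs_minus t u v = 2 * v * (u - 1) / A t"

definition instanton_field :: "real \<Rightarrow> real \<times> real \<Rightarrow> real \<times> real" where
  "instanton_field t y = (rhs_plus t (fst y) (snd y), rhs_minus t (fst y) (snd y))"

definition solves_on :: "real set \<Rightarrow> (real \<Rightarrow> real) \<Rightarrow> (real \<Rightarrow> real) \<Rightarrow> bool" where
  "solves_on S f g \<longleftrightarrow> (\<forall>t\<in>S. (f has_real_derivative rhs_plus t (f t) (g t)) (at t within S) \<and>
      (g has_real_derivative rhs_minus t (f t) (g t)) (at t within S))"

lemma A_continuous: "continuous_on {0<..} A"
  by (rule continuous_at_imp_continuous_on) (auto intro: DERIV_isCont A_deriv)

lemma A_growth:
  assumes "0 < s" "s \<le> t"
  shows "A s + (t - s) / 3 \<le> A t"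
proof -
  have "A s - s / 3 \<le> A t - t / 3"
  proof (rule DERIV_nonneg_imp_nondecreasing[OF \<open>s \<le> t\<close>])
    fix x assume "s \<le> x" "x \<le> t"
    then have "0 < x" using assms by simp
    then show "\<exists>y. ((\<lambda>x. A x - x / 3) has_real_derivative y) (at x) \<and> 0 \<le> y"
      using A_deriv \<epsilon>_pos[of x] by (auto intro!: exI derivative_eq_intros)
  qed
  then show ?thesis by (simp add: diff_divide_distrib)
qed

lemma A_mono:
  assumes "0 < s" "s \<le> t"
  shows "A s \<le> A t"
proof -
  have "0 \<le> (t - s) / 3" using assms by simp
  then show ?thesis using A_growth[OF assms] by linarith
qed

lemma continuous_on_instanton_field:
  assumes "0 < a"
  shows "continuous_on ({a..} \<times> UNIV) (\<lambda>(t, y). instanton_field t y)"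
proof -
  have sub: "fst ` ({a..} \<times> UNIV) \<subseteq> {0<..}" using assms by auto
  have "continuous_on ({a..} \<times> UNIV) (\<lambda>z. A (fst z))" "continuous_on ({a..} \<times> UNIV) (\<lambda>z. \<epsilon> (fst z))"
    using continuous_on_compose2[OF A_continuous continuous_on_fst sub]
      continuous_on_compose2[OF \<epsilon>_continuous continuous_on_fst sub] by auto
  moreover have "A (fst z) \<noteq> 0" if "z \<in> {a..} \<times> UNIV" for z
    using A_pos[of "fst z"] that assms by auto
  ultimately show ?thesis
    unfolding instanton_field_def rhs_plus_def rhs_minus_def case_prod_beta'
    by (intro continuous_intros) auto
qed

lemma lipschitz_on_instanton_field:
  assumes "0 < t0" "t0 \<le> t"
  shows "(8 * (\<bar>R\<bar> + 1) / A t0)-lipschitz_on (cball 0 R) (instanton_field t)"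
proof (rule lipschitz_onI)
  have t: "0 < t" "A t0 \<le> A t" "0 < A t" "0 < A t0" using assms A_mono A_pos by auto
  show "0 \<le> 8 * (\<bar>R\<bar> + 1) / A t0" using t by simp
  fix y z :: "real \<times> real"
  assume "y \<in> cball 0 R" "z \<in> cball 0 R"
  then have R: "\<bar>fst y\<bar> \<le> \<bar>R\<bar>" "\<bar>snd y\<bar> \<le> \<bar>R\<bar>" "\<bar>fst z\<bar> \<le> \<bar>R\<bar>" "\<bar>snd z\<bar> \<le> \<bar>R\<bar>"
    using norm_fst_le[of "fst y" "snd y"] norm_snd_le[of "snd y" "fst y"]
      norm_fst_le[of "fst z" "snd z"] norm_snd_le[of "snd z" "fst z"] by auto
  define \<delta> where "\<delta> = \<bar>fst y - fst z\<bar> + \<bar>snd y - snd z\<bar>"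
  have "dist y z = norm (fst y - fst z, snd y - snd z)"
    by (cases y, cases z) (simp add: dist_norm)
  then have \<delta>: "\<delta> \<le> 2 * dist y z"
    using norm_fst_le[of "fst y - fst z" "snd y - snd z"] norm_snd_le[of "snd y - snd z" "fst y - fst z"]
    by (simp add: \<delta>_def)
  have "\<bar>rhs_plus t (fst y) (snd y) - rhs_plus t (fst z) (snd z)\<bar> \<le> 2 * (\<bar>R\<bar> + 1) * \<delta> / A t"
    unfolding rhs_plus_def diff_divide_distrib[symmetric] abs_divide \<delta>_def abs_of_pos[OF t(3)]
    using plus_polynomial_lipschitz[OF R \<epsilon>_pos[OF t(1)] \<epsilon>_less[OF t(1)]] t(3)
    by (simp add: divide_right_mono)
  moreover have "\<bar>rhs_minus t (fst y) (snd y) - rhs_minus t (fst z) (snd z)\<bar> \<le> 2 * (\<bar>R\<bar> + 1) * \<delta> / A t"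
    unfolding rhs_minus_def mult.assoc diff_divide_distrib[symmetric] right_diff_distrib[symmetric]
      abs_divide abs_mult \<delta>_def abs_of_pos[OF t(3)]
    using minus_polynomial_lipschitz[OF R(1,4)] t(3) by (intro divide_right_mono) auto
  moreover have "2 * (\<bar>R\<bar> + 1) * \<delta> / A t \<le> 2 * (\<bar>R\<bar> + 1) * (2 * dist y z) / A t0"
    using t \<delta> by (intro frac_le mult_left_mono) auto
  moreover have "dist (instanton_field t y) (instanton_field t z)
      \<le> \<bar>rhs_plus t (fst y) (snd y) - rhs_plus t (fst z) (snd z)\<bar>
        + \<bar>rhs_minus t (fst y) (snd y) - rhs_minus t (fst z) (snd z)\<bar>"
    using norm_Pair_le[of "rhs_plus t (fst y) (snd y) - rhs_plus t (fst z) (snd z)"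
        "rhs_minus t (fst y) (snd y) - rhs_minus t (fst z) (snd z)"]
    by (simp add: instanton_field_def dist_norm)
  ultimately have "dist (instanton_field t y) (instanton_field t z)
      \<le> 2 * (2 * (\<bar>R\<bar> + 1) * (2 * dist y z) / A t0)"
    by linarith
  then show "dist (instanton_field t y) (instanton_field t z) \<le> 8 * (\<bar>R\<bar> + 1) / A t0 * dist y z"
    by (simp add: field_simps)
qed

lemma rhs_minus_nonpos:
  assumes "0 < t" "u \<le> 1" "0 \<le> v"
  shows "rhs_minus t u v \<le> 0"
  unfolding rhs_minus_def using assms A_pos[OF assms(1)]
  by (intro divide_nonpos_pos mult_nonneg_nonpos) auto

lemma rhs_minus_lower:
  assumes "0 < t0" "t0 \<le> t" "0 \<le> u" "u \<le> 1" "0 \<le> v"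
  shows "- (2 / A t0) * v \<le> rhs_minus t u v"
proof -
  have A: "0 < A t0" "A t0 \<le> A t" using assms A_pos A_mono by auto
  then have "2 * (1 - u) / A t * v \<le> 2 / A t0 * v"
    using assms by (intro mult_right_mono frac_le) auto
  moreover have "rhs_minus t u v = - (2 * (1 - u) / A t * v)"
    unfolding rhs_minus_def using A by (simp add: field_simps)
  ultimately show ?thesis by simp
qed

lemma rhs_plus_lower:
  assumes "0 < t0" "t0 \<le> t" "2/3 \<le> u" "u \<le> 1"
  shows "- (1 / A t0) * (u - 2/3) \<le> rhs_plus t u v"
proof -
  have A: "0 < A t0" "A t0 \<le> A t" using assms A_pos A_mono by auto
  have \<epsilon>: "0 < \<epsilon> t" "\<epsilon> t < 1/3" using assms \<epsilon>_pos \<epsilon>_less by auto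
  have "rhs_plus t u v = (u * \<epsilon> t + v\<^sup>2 * (1/3 - \<epsilon> t)) / A t - u / A t * (u - 2/3)"
    unfolding rhs_plus_def using A by (simp add: field_simps)
  moreover have "0 \<le> (u * \<epsilon> t + v\<^sup>2 * (1/3 - \<epsilon> t)) / A t"
    using assms A \<epsilon> by simp
  moreover have "u / A t * (u - 2/3) \<le> 1 / A t0 * (u - 2/3)"
    using assms A by (intro mult_right_mono frac_le) auto
  ultimately show ?thesis by simp
qed

text \<open>The condition \<open>rhs_plus t0 q m \<le> 0\<close> persists for \<open>t \<ge> t0\<close> because \<open>\<epsilon>\<close> decreases, and it
  makes \<open>f\<^sub>+ = q\<close> a barrier as long as \<open>\<bar>f\<^sub>-\<bar> \<le> m\<close>.\<close>

lemma rhs_plus_upper: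
  assumes "0 < t0" "t0 \<le> t" "u \<le> q" "q \<le> 1" "m\<^sup>2 \<le> q" "\<bar>v\<bar> \<le> m" and level: "rhs_plus t0 q m \<le> 0"
  shows "rhs_plus t u v \<le> 2 / A t0 * (q - u)"
proof -
  have A: "0 < A t0" "A t0 \<le> A t" "0 < A t" using assms A_pos A_mono by auto
  have \<epsilon>: "0 < \<epsilon> t" "\<epsilon> t < 1/3" "\<epsilon> t \<le> \<epsilon> t0" using assms \<epsilon>_pos \<epsilon>_less \<epsilon>_antimono by auto
  have "\<bar>v\<bar>\<^sup>2 \<le> m\<^sup>2" using assms(6) by (intro power_mono) auto
  then have "v\<^sup>2 \<le> m\<^sup>2" by simp
  then have "v\<^sup>2 * (1/3 - \<epsilon> t) \<le> m\<^sup>2 * (1/3 - \<epsilon> t)" using \<epsilon> by (intro mult_right_mono) auto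
  moreover have "u * (2/3 + \<epsilon> t - u) + m\<^sup>2 * (1/3 - \<epsilon> t)
      = A t0 * rhs_plus t0 q m + (\<epsilon> t - \<epsilon> t0) * (q - m\<^sup>2) + (q - u) * (u + q - 2/3 - \<epsilon> t)"
    using A by (simp add: rhs_plus_def) algebra
  moreover have "A t0 * rhs_plus t0 q m \<le> 0" using A level by (simp add: mult_nonneg_nonpos)
  moreover have "(\<epsilon> t - \<epsilon> t0) * (q - m\<^sup>2) \<le> 0" using \<epsilon> assms by (intro mult_nonpos_nonneg) auto
  moreover have "(q - u) * (u + q - 2/3 - \<epsilon> t) \<le> (q - u) * 2" using \<epsilon> assms by (intro mult_left_mono) auto
  ultimately have "u * (2/3 + \<epsilon> t - u) + v\<^sup>2 * (1/3 - \<epsilon> t) \<le> (q - u) * 2" by linarith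
  then have "rhs_plus t u v \<le> 2 / A t * (q - u)"
    unfolding rhs_plus_def using A by (simp add: divide_right_mono)
  also have "\<dots> \<le> 2 / A t0 * (q - u)" using A assms by (intro mult_right_mono frac_le) auto
  finally show ?thesis .
qed

lemma trapped_region_step:
  fixes \<phi> \<psi> :: "real \<Rightarrow> real"
  assumes t0: "0 < t0" and "t0 < b"
    and q: "2/3 < p" "p < q" "q < 1" "0 < m" "m < 1" "m\<^sup>2 < q"
    and level: "rhs_plus t0 q m \<le> 0"
    and init: "\<phi> t0 = p" "\<psi> t0 = m"
    and cont: "continuous_on {t0..b} \<phi>" "continuous_on {t0..b} \<psi>"
    and inside: "\<And>x. t0 < x \<Longrightarrow> x < b \<Longrightarrow> 2/3 < \<phi> x \<and> \<phi> x < q \<and> 0 < \<psi> x \<and> \<psi> x < 1"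
    and d\<phi>: "\<And>x. t0 < x \<Longrightarrow> x < b \<Longrightarrow> (\<phi> has_real_derivative rhs_plus x (\<phi> x) (\<psi> x)) (at x)"
    and d\<psi>: "\<And>x. t0 < x \<Longrightarrow> x < b \<Longrightarrow> (\<psi> has_real_derivative rhs_minus x (\<phi> x) (\<psi> x)) (at x)"
  shows "2/3 < \<phi> b \<and> \<phi> b < q \<and> 0 < \<psi> b \<and> \<psi> b < 1"
proof -
  have \<psi>_le: "\<psi> x \<le> m" if "t0 \<le> x" "x \<le> b" for x
  proof -
    have "\<psi> x \<le> \<psi> t0"
    proof (rule DERIV_nonpos_imp_decreasing_open[OF \<open>t0 \<le> x\<close>])
      show "continuous_on {t0..x} \<psi>" using cont(2) that by (auto intro: continuous_on_subset)
      fix s assume s: "t0 < s" "s < x"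
      show "\<exists>y. (\<psi> has_real_derivative y) (at s) \<and> y \<le> 0"
        using d\<psi>[of s] rhs_minus_nonpos[of s "\<phi> s" "\<psi> s"] inside[of s] s that t0 q by auto
    qed
    then show ?thesis using init by simp
  qed
  have "0 < \<psi> b"
  proof (rule DERIV_ge_mult_imp_pos[OF _ cont(2) d\<psi>])
    show "- (2 / A t0) * \<psi> x \<le> rhs_minus x (\<phi> x) (\<psi> x)" if "t0 < x" "x < b" for x
      using rhs_minus_lower[OF t0, of x "\<phi> x" "\<psi> x"] inside[OF that] that q by auto
  qed (use \<open>t0 < b\<close> init q in auto)
  moreover have "0 < \<phi> b - 2/3"
  proof (rule DERIV_ge_mult_imp_pos[where f="\<lambda>t. \<phi> t - 2/3"])
    show "continuous_on {t0..b} (\<lambda>t. \<phi> t - 2/3)" by (intro continuous_intros cont)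
    show "((\<lambda>t. \<phi> t - 2/3) has_real_derivative rhs_plus x (\<phi> x) (\<psi> x)) (at x)" if "t0 < x" "x < b" for x
      using d\<phi>[OF that] by (auto intro!: derivative_eq_intros)
    show "- (1 / A t0) * (\<phi> x - 2/3) \<le> rhs_plus x (\<phi> x) (\<psi> x)" if "t0 < x" "x < b" for x
      using rhs_plus_lower[OF t0, of x "\<phi> x" "\<psi> x"] inside[OF that] that q by auto
  qed (use \<open>t0 < b\<close> init q in auto)
  moreover have "0 < q - \<phi> b"
  proof (rule DERIV_ge_mult_imp_pos[where f="\<lambda>t. q - \<phi> t"])
    show "continuous_on {t0..b} (\<lambda>t. q - \<phi> t)" by (intro continuous_intros cont)
    show "((\<lambda>t. q - \<phi> t) has_real_derivative - rhs_plus x (\<phi> x) (\<psi> x)) (at x)" if "t0 < x" "x < b" for x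
      using d\<phi>[OF that] by (auto intro!: derivative_eq_intros)
    show "- (2 / A t0) * (q - \<phi> x) \<le> - rhs_plus x (\<phi> x) (\<psi> x)" if "t0 < x" "x < b" for x
      using rhs_plus_upper[OF t0 _ _ _ _ _ level, of x "\<phi> x" "\<psi> x"] inside[OF that] \<psi>_le[of x] that q
      by auto
  qed (use \<open>t0 < b\<close> init q in auto)
  moreover have "\<psi> b < 1" using \<psi>_le[of b] \<open>t0 < b\<close> q by simp
  ultimately show ?thesis by simp
qed

lemma trapped_region_invariant:
  fixes \<phi> \<psi> :: "real \<Rightarrow> real"
  assumes t0: "0 < t0"
    and q: "2/3 < p" "p < q" "q < 1" "0 < m" "m < 1" "m\<^sup>2 < q"
    and level: "rhs_plus t0 q m \<le> 0"
    and init: "\<phi> t0 = p" "\<psi> t0 = m"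
    and cont: "continuous_on {t0..} \<phi>" "continuous_on {t0..} \<psi>"
    and deriv: "\<And>t. t0 < t \<Longrightarrow> 2/3 < \<phi> t \<Longrightarrow> \<phi> t < q \<Longrightarrow> 0 < \<psi> t \<Longrightarrow> \<psi> t < 1 \<Longrightarrow>
        (\<phi> has_real_derivative rhs_plus t (\<phi> t) (\<psi> t)) (at t) \<and>
        (\<psi> has_real_derivative rhs_minus t (\<phi> t) (\<psi> t)) (at t)"
    and "t0 \<le> t"
  shows "2/3 < \<phi> t \<and> \<phi> t < q \<and> 0 < \<psi> t \<and> \<psi> t < 1"
proof -
  define g where "g t = min (min (\<phi> t - 2/3) (q - \<phi> t)) (min (\<psi> t) (1 - \<psi> t))" for t
  have "0 < g t"
  proof (rule pos_on_ray_by_continuity[OF _ _ _ \<open>t0 \<le> t\<close>])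
    show "continuous_on {t0..} g" unfolding g_def by (intro continuous_intros cont)
    show "0 < g t0" unfolding g_def using q init by auto
    fix b assume b: "t0 < b" and "\<And>s. t0 \<le> s \<Longrightarrow> s < b \<Longrightarrow> 0 < g s"
    then have inside: "2/3 < \<phi> x \<and> \<phi> x < q \<and> 0 < \<psi> x \<and> \<psi> x < 1" if "t0 < x" "x < b" for x
      using that unfolding g_def by fastforce
    have "2/3 < \<phi> b \<and> \<phi> b < q \<and> 0 < \<psi> b \<and> \<psi> b < 1"
    proof (rule trapped_region_step[where \<phi>=\<phi> and \<psi>=\<psi>, OF t0 b q level init _ _ inside])
      show "continuous_on {t0..b} \<phi>" "continuous_on {t0..b} \<psi>"
        using cont by (auto intro: continuous_on_subset)
    qed (use deriv inside in blast)+
    then show "0 < g b" unfolding g_def by simp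
  qed
  then show ?thesis unfolding g_def by simp
qed
end

locale trapped_solution = instanton_coefficients +
  fixes t0 q :: real and \<phi> \<psi> :: "real \<Rightarrow> real"
  assumes t0_pos: "0 < t0" and q_less_1: "q < 1"
    and \<phi>_deriv: "\<And>t. t0 < t \<Longrightarrow> (\<phi> has_real_derivative rhs_plus t (\<phi> t) (\<psi> t)) (at t)"
    and \<psi>_deriv: "\<And>t. t0 < t \<Longrightarrow> (\<psi> has_real_derivative rhs_minus t (\<phi> t) (\<psi> t)) (at t)"
    and trapped: "\<And>t. t0 \<le> t \<Longrightarrow> 2/3 < \<phi> t \<and> \<phi> t < q \<and> 0 < \<psi> t \<and> \<psi> t < 1"

context instanton_coefficients
begin

lemma instanton_field_unit_square:
  assumes "0 < t0" "t0 \<le> t"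
  shows "(24 / A t0)-lipschitz_on (cbox 0 (1, 1)) (instanton_field t)"
    and "y \<in> cbox 0 (1, 1) \<Longrightarrow> norm (instanton_field t y) \<le> 48 / A t0"
proof -
  have norm_le: "norm y \<le> 2" if "y \<in> cbox (0 :: real \<times> real) (1, 1)" for y
    using that norm_Pair_le[of "fst y" "snd y"] by (auto simp: cbox_unit_square)
  have "cbox 0 (1, 1) \<subseteq> cball (0 :: real \<times> real) 2"
  proof
    fix y assume "y \<in> cbox (0 :: real \<times> real) (1, 1)"
    then show "y \<in> cball 0 2" using norm_le by (simp add: mem_cball_0)
  qed
  from lipschitz_on_subset[OF lipschitz_on_instanton_field[OF assms, of 2] this]
  show lip: "(24 / A t0)-lipschitz_on (cbox 0 (1, 1)) (instanton_field t)" by simp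
  assume y: "y \<in> cbox 0 (1, 1)"
  have "instanton_field t 0 = 0"
    by (simp add: instanton_field_def rhs_plus_def rhs_minus_def zero_prod_def)
  moreover have "norm (instanton_field t y - instanton_field t 0) \<le> 24 / A t0 * norm (y - 0)"
    using y by (intro lipschitz_on_normD[OF lip]) (auto simp: cbox_unit_square zero_prod_def)
  ultimately have "norm (instanton_field t y) \<le> 24 / A t0 * norm (y - 0)" by simp
  also have "\<dots> \<le> 24 / A t0 * 2" using norm_le[OF y] A_pos[OF assms(1)] by (intro mult_left_mono) auto
  finally show "norm (instanton_field t y) \<le> 48 / A t0" by simp
qed

text \<open>The clamped field is globally Lipschitz; the curve it produces solves the actual system
  while it stays in the unit square.\<close>

lemma exists_solution_in_unit_square:
  assumes t0: "0 < t0"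
  obtains \<phi> \<psi> where "\<phi> t0 = p" "\<psi> t0 = m" "continuous_on {t0..} \<phi>" "continuous_on {t0..} \<psi>"
    "\<And>t. t0 \<le> t \<Longrightarrow> 0 \<le> \<phi> t \<Longrightarrow> \<phi> t \<le> 1 \<Longrightarrow> 0 \<le> \<psi> t \<Longrightarrow> \<psi> t \<le> 1 \<Longrightarrow>
      (\<phi> has_real_derivative rhs_plus t (\<phi> t) (\<psi> t)) (at t within {t0..}) \<and>
      (\<psi> has_real_derivative rhs_minus t (\<phi> t) (\<psi> t)) (at t within {t0..})"
proof -
  have basis: "(0 :: real \<times> real) \<bullet> i \<le> (1, 1) \<bullet> i" if "i \<in> Basis" for i
    using that by (auto simp: Basis_prod_def)
  have cont: "continuous_on ({t0..} \<times> cbox 0 (1, 1)) (\<lambda>(t, y). instanton_field t y)"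
    by (rule continuous_on_subset[OF continuous_on_instanton_field[OF t0]]) auto
  obtain y where y0: "y t0 = (p, m)"
    and y: "\<And>t. t0 \<le> t \<Longrightarrow>
      (y has_vector_derivative instanton_field t (clamp 0 (1, 1) (y t))) (at t within {t0..})"
    using picard_existence_clamped[OF basis cont instanton_field_unit_square(2)[OF t0]
        instanton_field_unit_square(1)[OF t0]] by blast
  define \<phi> \<psi> where "\<phi> t = fst (y t)" and "\<psi> t = snd (y t)" for t
  have y_eq: "y = (\<lambda>t. (\<phi> t, \<psi> t))" by (simp add: \<phi>_def \<psi>_def)
  have "continuous_on {t0..} y"
    unfolding continuous_on_eq_continuous_within using has_vector_derivative_continuous[OF y] by blast
  then have cont: "continuous_on {t0..} \<phi>" "continuous_on {t0..} \<psi>"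
    unfolding \<phi>_def \<psi>_def by (auto intro: continuous_intros)
  have init: "\<phi> t0 = p" "\<psi> t0 = m" using y0 by (simp_all add: \<phi>_def \<psi>_def)
  have "(\<phi> has_real_derivative rhs_plus t (\<phi> t) (\<psi> t)) (at t within {t0..}) \<and>
      (\<psi> has_real_derivative rhs_minus t (\<phi> t) (\<psi> t)) (at t within {t0..})"
    if "t0 \<le> t" "0 \<le> \<phi> t" "\<phi> t \<le> 1" "0 \<le> \<psi> t" "\<psi> t \<le> 1" for t
  proof -
    have "clamp 0 (1, 1) (y t) = (\<phi> t, \<psi> t)"
      using that by (subst clamp_cancel_cbox) (auto simp: cbox_unit_square y_eq)
    then show ?thesis
      using y[OF that(1)] by (simp add: y_eq instanton_field_def has_vector_derivative_Pair_iff)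
  qed
  then show ?thesis by (rule that[OF init cont])
qed

lemma exists_trapped_solution:
  assumes t0: "0 < t0" and pm: "2/3 < p" "p < 1" "0 < m" "m < 1"
  obtains \<phi> \<psi> q where "\<phi> t0 = p" "\<psi> t0 = m" "solves_on {t0..} \<phi> \<psi>"
    "trapped_solution A \<epsilon> t0 q \<phi> \<psi>"
proof -
  obtain q where q: "p < q" "q < 1" "m\<^sup>2 < q" "q * (2/3 + \<epsilon> t0 - q) + m\<^sup>2 * (1/3 - \<epsilon> t0) < 0"
    using exists_trapping_level[of p m "\<epsilon> t0"] pm t0 \<epsilon>_less by auto
  have level: "rhs_plus t0 q m \<le> 0"
    unfolding rhs_plus_def using q(4) A_pos[OF t0] by (simp add: divide_nonpos_pos)
  obtain \<phi> \<psi> where start: "\<phi> t0 = p" "\<psi> t0 = m" and cont: "continuous_on {t0..} \<phi>" "continuous_on {t0..} \<psi>"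
    and deriv: "\<And>t. t0 \<le> t \<Longrightarrow> 0 \<le> \<phi> t \<Longrightarrow> \<phi> t \<le> 1 \<Longrightarrow> 0 \<le> \<psi> t \<Longrightarrow> \<psi> t \<le> 1 \<Longrightarrow>
      (\<phi> has_real_derivative rhs_plus t (\<phi> t) (\<psi> t)) (at t within {t0..}) \<and>
      (\<psi> has_real_derivative rhs_minus t (\<phi> t) (\<psi> t)) (at t within {t0..})"
    using exists_solution_in_unit_square[OF t0] by blast
  have trapped: "2/3 < \<phi> t \<and> \<phi> t < q \<and> 0 < \<psi> t \<and> \<psi> t < 1" if "t0 \<le> t" for t
  proof (rule trapped_region_invariant[OF t0 pm(1) q(1,2) pm(3,4) q(3) level start cont _ that])
    fix s assume s: "t0 < s" "2/3 < \<phi> s" "\<phi> s < q" "0 < \<psi> s" "\<psi> s < 1"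
    have "at s within {t0..} = at s" by (rule at_within_interior) (use s in simp)
    then show "(\<phi> has_real_derivative rhs_plus s (\<phi> s) (\<psi> s)) (at s) \<and>
        (\<psi> has_real_derivative rhs_minus s (\<phi> s) (\<psi> s)) (at s)"
      using deriv[of s] s q by simp
  qed
  have solves: "(\<phi> has_real_derivative rhs_plus t (\<phi> t) (\<psi> t)) (at t within {t0..}) \<and>
      (\<psi> has_real_derivative rhs_minus t (\<phi> t) (\<psi> t)) (at t within {t0..})" if "t0 \<le> t" for t
    using deriv[OF that] trapped[OF that] q by simp
  have "trapped_solution A \<epsilon> t0 q \<phi> \<psi>"
  proof (intro trapped_solution.intro trapped_solution_axioms.intro instanton_coefficients_axioms)
    fix t assume "t0 < t"
    then have "at t within {t0..} = at t" by (intro at_within_interior) simp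
    then show "(\<phi> has_real_derivative rhs_plus t (\<phi> t) (\<psi> t)) (at t)"
      "(\<psi> has_real_derivative rhs_minus t (\<phi> t) (\<psi> t)) (at t)"
      using solves[of t] \<open>t0 < t\<close> by simp_all
  qed (use t0 q trapped in auto)
  moreover have "solves_on {t0..} \<phi> \<psi>" using solves by (simp add: solves_on_def)
  ultimately show ?thesis using start that by blast
qed

lemma instanton_solution_unique:
  assumes t0: "0 < t0" and "t0 \<le> t" and S: "{t0..t} \<subseteq> S" and S': "{t0..t} \<subseteq> S'"
    and f: "solves_on S fp fm" and g: "solves_on S' gp gm"
    and start: "fp t0 = gp t0" "fm t0 = gm t0"
  shows "fp t = gp t \<and> fm t = gm t"
proof -
  have "(\<lambda>s. (fp s, fm s)) t = (\<lambda>s. (gp s, gm s)) t"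
  proof (rule ode_solution_unique[OF \<open>t0 \<le> t\<close>])
    show "((\<lambda>s. (fp s, fm s)) has_vector_derivative instanton_field s (fp s, fm s)) (at s within {t0..t})"
      if "s \<in> {t0..t}" for s
    proof -
      have "s \<in> S" using that S by auto
      with f have "(fp has_real_derivative rhs_plus s (fp s) (fm s)) (at s within S)"
        "(fm has_real_derivative rhs_minus s (fp s) (fm s)) (at s within S)"
        by (auto simp: solves_on_def)
      then show ?thesis using DERIV_subset[OF _ S]
        by (simp add: instanton_field_def has_vector_derivative_Pair_iff)
    qed
    show "((\<lambda>s. (gp s, gm s)) has_vector_derivative instanton_field s (gp s, gm s)) (at s within {t0..t})"
      if "s \<in> {t0..t}" for s
    proof -
      have "s \<in> S'" using that S' by auto
      with g have "(gp has_real_derivative rhs_plus s (gp s) (gm s)) (at s within S')"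
        "(gm has_real_derivative rhs_minus s (gp s) (gm s)) (at s within S')"
        by (auto simp: solves_on_def)
      then show ?thesis using DERIV_subset[OF _ S']
        by (simp add: instanton_field_def has_vector_derivative_Pair_iff)
    qed
    show "\<exists>L. \<forall>s\<in>{t0..t}. L-lipschitz_on (cball 0 R) (instanton_field s)" for R
      using lipschitz_on_instanton_field[OF t0, of _ R] by (intro exI[of _ "8 * (\<bar>R\<bar> + 1) / A t0"]) auto
  qed (simp add: start)
  then show ?thesis by simp
qed

end

section \<open>Asymptotics of trapped solutions\<close>

lemma inverse_square_approx:
  fixes a t D :: real
  assumes D: "\<bar>t - 3 * a\<bar> \<le> D" and t: "2 * D \<le> t" "0 < t"
  shows "1 / a ^ n \<le> 6 ^ n / t ^ n" and "\<bar>1 / a\<^sup>2 - 9 / t\<^sup>2\<bar> \<le> 108 * D / t ^ 3"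
proof -
  have a: "t / 6 \<le> a" "0 < a" "0 < t + 3 * a" "t + 3 * a \<le> 3 * t" "0 \<le> D"
    using D t by (auto simp: abs_le_iff)
  have "(t / 6) ^ n \<le> a ^ n" for n using a t by (intro power_mono) auto
  then show inv: "1 / a ^ n \<le> 6 ^ n / t ^ n" for n
    using a t by (simp add: divide_simps power_divide mult.commute)
  have "1 / a\<^sup>2 - 9 / t\<^sup>2 = (t - 3 * a) * (t + 3 * a) * (1 / a\<^sup>2) / t\<^sup>2"
    using a t by (simp add: field_simps power2_eq_square)
  then have "\<bar>1 / a\<^sup>2 - 9 / t\<^sup>2\<bar> = \<bar>t - 3 * a\<bar> * (t + 3 * a) * (1 / a\<^sup>2) / t\<^sup>2"
    using a by (simp add: abs_mult abs_divide)
  also have "\<dots> \<le> D * (3 * t) * (6\<^sup>2 / t\<^sup>2) / t\<^sup>2"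
    using D a inv[of 2] by (intro divide_right_mono mult_mono) auto
  also have "\<dots> = 108 * D / t ^ 3"
    using t by (simp add: field_simps power2_eq_square power3_eq_cube)
  finally show "\<bar>1 / a\<^sup>2 - 9 / t\<^sup>2\<bar> \<le> 108 * D / t ^ 3" .
qed

lemma inverse_square_expansion:
  fixes A f :: "real \<Rightarrow> real"
  assumes lin: "\<And>t. T \<le> t \<Longrightarrow> \<bar>t - 3 * A t\<bar> \<le> D"
    and conv: "\<And>t. T \<le> t \<Longrightarrow> \<bar>(A t)\<^sup>2 * f t - c\<bar> \<le> K / A t"
  shows "(\<lambda>t. f t - 9 * c / t\<^sup>2) \<in> O[at_top](\<lambda>t. 1 / t ^ 3)"
proof (rule bigoI)
  have bound: "\<bar>f t - 9 * c / t\<^sup>2\<bar> \<le> (216 * \<bar>K\<bar> + 108 * \<bar>D\<bar> * \<bar>c\<bar>) * (1 / t ^ 3)"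
    if t: "T \<le> t" "2 * \<bar>D\<bar> \<le> t" "0 < t" for t
  proof -
    note approx = inverse_square_approx[of t "A t" "\<bar>D\<bar>"]
    have D: "\<bar>t - 3 * A t\<bar> \<le> \<bar>D\<bar>" using lin[OF t(1)] by simp
    have A: "0 < A t" using D t by (auto simp: abs_le_iff)
    have "f t - 9 * c / t\<^sup>2 = ((A t)\<^sup>2 * f t - c) / (A t)\<^sup>2 + c * (1 / (A t)\<^sup>2 - 9 / t\<^sup>2)"
      using A by (simp add: field_simps)
    also have "\<bar>\<dots>\<bar> \<le> \<bar>K\<bar> / A t / (A t)\<^sup>2 + \<bar>c\<bar> * (108 * \<bar>D\<bar> / t ^ 3)"
    proof (rule order_trans[OF abs_triangle_ineq add_mono])
      have "K / A t \<le> \<bar>K\<bar> / A t" using A by (intro divide_right_mono) auto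
      then have "\<bar>(A t)\<^sup>2 * f t - c\<bar> \<le> \<bar>K\<bar> / A t" using conv[OF t(1)] by linarith
      then show "\<bar>((A t)\<^sup>2 * f t - c) / (A t)\<^sup>2\<bar> \<le> \<bar>K\<bar> / A t / (A t)\<^sup>2"
        unfolding abs_divide abs_power2 by (rule divide_right_mono) simp
      show "\<bar>c * (1 / (A t)\<^sup>2 - 9 / t\<^sup>2)\<bar> \<le> \<bar>c\<bar> * (108 * \<bar>D\<bar> / t ^ 3)"
        unfolding abs_mult using approx(2) D t by (intro mult_left_mono) auto
    qed
    also have "\<bar>K\<bar> / A t / (A t)\<^sup>2 = \<bar>K\<bar> * (1 / A t ^ 3)"
      by (simp add: power2_eq_square power3_eq_cube)
    also have "\<dots> \<le> \<bar>K\<bar> * (6 ^ 3 / t ^ 3)"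
      using approx(1)[of 3] D t by (intro mult_left_mono) auto
    finally show ?thesis by (simp add: field_simps add_divide_distrib)
  qed
  show "\<forall>\<^sub>F t in at_top. norm (f t - 9 * c / t\<^sup>2) \<le> (216 * \<bar>K\<bar> + 108 * \<bar>D\<bar> * \<bar>c\<bar>) * norm (1 / t ^ 3)"
    using eventually_ge_at_top[of T] eventually_ge_at_top[of "2 * \<bar>D\<bar>"] eventually_gt_at_top[of 0]
  proof eventually_elim
    case (elim t)
    then show ?case using bound[of t] by simp
  qed
qed

lemma tendsto_of_expansion:
  fixes f :: "real \<Rightarrow> real"
  assumes "(\<lambda>t. f t - c - \<mu> / t\<^sup>2) \<in> O[at_top](\<lambda>t. 1 / t ^ 3)"
  shows "(f \<longlongrightarrow> c) at_top"
proof -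
  have "(\<lambda>t. 1 / t ^ 3 :: real) \<in> o[at_top](\<lambda>_. 1)" by real_asymp
  with assms have "(\<lambda>t. f t - c - \<mu> / t\<^sup>2) \<in> o[at_top](\<lambda>_. 1)"
    by (rule landau_o.big_small_trans)
  then have "((\<lambda>t. f t - c - \<mu> / t\<^sup>2) \<longlongrightarrow> 0) at_top"
    using smalloD_tendsto by fastforce
  moreover have "((\<lambda>t. \<mu> / t\<^sup>2 :: real) \<longlongrightarrow> 0) at_top" by real_asymp
  ultimately have "((\<lambda>t. (f t - c - \<mu> / t\<^sup>2) + \<mu> / t\<^sup>2 + c) \<longlongrightarrow> 0 + 0 + c) at_top"
    by (intro tendsto_add tendsto_const)
  then show ?thesis by simp
qed

context trapped_solution
begin

definition t1 :: real where "t1 = t0 + 3"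

lemma late_bounds:
  assumes "t1 \<le> t"
  shows "t0 < t" "1 \<le> A t" "0 < A t" "0 < \<epsilon> t" "\<epsilon> t < 1/3" "\<epsilon> t \<le> 1 / (81 * A t ^ 3)"
    "2/3 < \<phi> t" "\<phi> t < q" "0 < \<psi> t" "\<psi> t < 1"
proof -
  show t: "t0 < t" using assms t0_pos by (simp add: t1_def)
  have "A t0 + (t - t0) / 3 \<le> A t" using A_growth[OF t0_pos] t by simp
  moreover have "1 \<le> (t - t0) / 3" using assms by (simp add: t1_def)
  ultimately show "1 \<le> A t" using A_pos[OF t0_pos] by linarith
  then show "0 < A t" by simp
  show "0 < \<epsilon> t" "\<epsilon> t < 1/3" "\<epsilon> t \<le> 1 / (81 * A t ^ 3)"
    using t t0_pos \<epsilon>_pos \<epsilon>_less \<epsilon>_le_A by auto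
  show "2/3 < \<phi> t" "\<phi> t < q" "0 < \<psi> t" "\<psi> t < 1" using trapped[of t] t by auto
qed

lemma A_deriv_late:
  assumes "t1 \<le> t" shows "(A has_real_derivative 1/3 + \<epsilon> t / 2) (at t)"
  using A_deriv late_bounds(1)[OF assms] t0_pos by simp

lemma inverse_A_power_deriv:
  assumes "t1 \<le> t"
  shows "((\<lambda>t. K / A t ^ n) has_real_derivative - (n * K * (1/3 + \<epsilon> t / 2) / A t ^ Suc n)) (at t)"
proof (cases n)
  case (Suc m)
  have "((\<lambda>t. K / A t ^ n) has_real_derivative
      - (K * (real n * A t ^ (n - 1) * (1/3 + \<epsilon> t / 2)) / (A t ^ n * A t ^ n))) (at t)"
    using A_deriv_late[OF assms] late_bounds(3)[OF assms] by (auto intro!: derivative_eq_intros)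
  moreover have "K * (real n * A t ^ (n - 1) * (1/3 + \<epsilon> t / 2)) / (A t ^ n * A t ^ n)
      = n * K * (1/3 + \<epsilon> t / 2) / A t ^ Suc n"
    using late_bounds(3)[OF assms] by (simp add: Suc field_simps)
  ultimately show ?thesis by simp
qed simp

lemma A_powr_deriv:
  assumes "t1 \<le> t"
  shows "((\<lambda>t. A t powr g) has_real_derivative g * A t powr (g - 1) * (1/3 + \<epsilon> t / 2)) (at t)"
  using DERIV_fun_powr[OF A_deriv_late[OF assms] late_bounds(3)[OF assms]] by simp

text \<open>Since \<open>A' \<ge> 1/3\<close>, the functions \<open>f \<mp> 3c / (n A\<^sup>n)\<close> are monotone and squeeze the limit.\<close>

lemma converges_at_inverse_power_rate:
  fixes f f' :: "real \<Rightarrow> real"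
  assumes "0 < n"
    and f: "\<And>t. t1 \<le> t \<Longrightarrow> (f has_real_derivative f' t) (at t)"
    and bound: "\<And>t. t1 \<le> t \<Longrightarrow> \<bar>f' t\<bar> \<le> c / A t ^ Suc n"
  obtains L where "\<And>t. t1 \<le> t \<Longrightarrow> \<bar>f t - L\<bar> \<le> 3 * c / n / A t ^ n"
proof -
  define K where "K = 3 * c / n"
  have c: "0 \<le> c"
  proof (rule ccontr)
    assume "\<not> 0 \<le> c"
    then have "c / A t1 ^ Suc n < 0" using late_bounds(3)[of t1] by (simp add: divide_neg_pos)
    then show False using bound[of t1] by simp
  qed
  have rate: "\<bar>f' t\<bar> \<le> n * K * (1/3 + \<epsilon> t / 2) / A t ^ Suc n" if "t1 \<le> t" for t
  proof -
    have "c * 1 \<le> c * (3 * (1/3 + \<epsilon> t / 2))" using c late_bounds[OF that] by (intro mult_left_mono) auto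
    then have "c / A t ^ Suc n \<le> n * K * (1/3 + \<epsilon> t / 2) / A t ^ Suc n"
      using \<open>0 < n\<close> late_bounds[OF that] by (intro divide_right_mono) (auto simp: K_def algebra_simps)
    then show ?thesis using bound[OF that] by linarith
  qed
  define h where "h t = f t + (- K) / A t ^ n" for t
  define g where "g t = f t + K / A t ^ n" for t
  have "h s \<le> h t" if "t1 \<le> s" "s \<le> t" for s t
  proof (rule DERIV_nonneg_imp_mono_ray[OF _ _ that])
    show "(h has_real_derivative f' x + - (n * (- K) * (1/3 + \<epsilon> x / 2) / A x ^ Suc n)) (at x)"
      if "t1 \<le> x" for x
      unfolding h_def[abs_def] by (rule DERIV_add[OF f[OF that] inverse_A_power_deriv[OF that]])
    show "0 \<le> f' x + - (n * (- K) * (1/3 + \<epsilon> x / 2) / A x ^ Suc n)" if "t1 \<le> x" for x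
      using rate[OF that] by (simp add: abs_le_iff)
  qed
  moreover have "g t \<le> g s" if "t1 \<le> s" "s \<le> t" for s t
  proof (rule DERIV_nonpos_imp_antimono_ray[OF _ _ that])
    show "(g has_real_derivative f' x + - (n * K * (1/3 + \<epsilon> x / 2) / A x ^ Suc n)) (at x)"
      if "t1 \<le> x" for x
      unfolding g_def[abs_def] by (rule DERIV_add[OF f[OF that] inverse_A_power_deriv[OF that]])
    show "f' x + - (n * K * (1/3 + \<epsilon> x / 2) / A x ^ Suc n) \<le> 0" if "t1 \<le> x" for x
      using rate[OF that] by (simp add: abs_le_iff)
  qed
  moreover have "h t \<le> g t" if "t1 \<le> t" for t
    using c \<open>0 < n\<close> late_bounds[OF that] by (simp add: h_def g_def K_def)
  ultimately obtain L where L: "\<And>t. t1 \<le> t \<Longrightarrow> h t \<le> L \<and> L \<le> g t"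
    using mono_antimono_sandwich[of t1 h g] by blast
  show ?thesis
  proof (rule that)
    fix t assume "t1 \<le> t"
    then show "\<bar>f t - L\<bar> \<le> 3 * c / n / A t ^ n"
      using L[of t] by (simp add: h_def g_def K_def abs_le_iff)
  qed
qed

lemma A_nearly_linear:
  obtains D where "\<And>t. t1 \<le> t \<Longrightarrow> \<bar>t - 3 * A t\<bar> \<le> D"
proof -
  obtain a where a: "\<And>t. t1 \<le> t \<Longrightarrow> \<bar>(A t - t / 3) - a\<bar> \<le> 3 * (1/162) / 2 / A t ^ 2"
  proof (rule converges_at_inverse_power_rate)
    show "((\<lambda>t. A t - t / 3) has_real_derivative \<epsilon> t / 2) (at t)" if "t1 \<le> t" for t
      using A_deriv_late[OF that] by (auto intro!: derivative_eq_intros)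
    show "\<bar>\<epsilon> t / 2\<bar> \<le> 1/162 / A t ^ Suc 2" if "t1 \<le> t" for t
      using late_bounds[OF that] by (simp add: field_simps)
  qed auto
  show ?thesis
  proof (rule that)
    fix t assume t: "t1 \<le> t"
    have "1\<^sup>2 \<le> (A t)\<^sup>2" using late_bounds(2)[OF t] by (intro power_mono) auto
    then have "3 * (1/162) / 2 / A t ^ 2 \<le> 1" using late_bounds(3)[OF t] by (simp add: field_simps)
    then have "\<bar>(A t - t / 3) - a\<bar> \<le> 1" using a[OF t] by linarith
    then show "\<bar>t - 3 * A t\<bar> \<le> 3 * \<bar>a\<bar> + 3"
      using abs_ge_self[of a] abs_ge_minus_self[of a] by (simp add: abs_le_iff field_simps)
  qed
qed

definition \<Phi> :: "real \<Rightarrow> real" where "\<Phi> t = (A t)\<^sup>2 * (\<phi> t - 2/3)"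

definition \<Phi>' :: "real \<Rightarrow> real" where
  "\<Phi>' t = A t * (\<epsilon> t * (2 * \<phi> t - 2/3) - (\<phi> t - 2/3)\<^sup>2 + (\<psi> t)\<^sup>2 * (1/3 - \<epsilon> t))"

definition \<Psi> :: "real \<Rightarrow> real" where "\<Psi> t = (A t)\<^sup>2 * \<psi> t"

lemma \<Phi>_pos: assumes "t1 \<le> t" shows "0 < \<Phi> t"
  using late_bounds[OF assms] by (simp add: \<Phi>_def)

lemma \<Psi>_pos: assumes "t1 \<le> t" shows "0 < \<Psi> t"
  using late_bounds[OF assms] by (simp add: \<Psi>_def)

lemma \<Phi>_deriv:
  assumes "t1 \<le> t" shows "(\<Phi> has_real_derivative \<Phi>' t) (at t)"
proof -
  have "(\<Phi> has_real_derivative 2 * A t * (1/3 + \<epsilon> t / 2) * (\<phi> t - 2/3) + (A t)\<^sup>2 * rhs_plus t (\<phi> t) (\<psi> t)) (at t)"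
    unfolding \<Phi>_def[abs_def] using A_deriv_late[OF assms] \<phi>_deriv[OF late_bounds(1)[OF assms]]
    by (auto intro!: derivative_eq_intros)
  moreover have "2 * A t * (1/3 + \<epsilon> t / 2) * (\<phi> t - 2/3) + (A t)\<^sup>2 * rhs_plus t (\<phi> t) (\<psi> t) = \<Phi>' t"
    using late_bounds(3)[OF assms] by (simp add: \<Phi>'_def rhs_plus_def field_simps power2_eq_square)
  ultimately show ?thesis by simp
qed

lemma ln_\<Psi>_deriv:
  assumes "t1 \<le> t"
  shows "((\<lambda>t. ln (\<Psi> t)) has_real_derivative (2 * (\<phi> t - 2/3) + \<epsilon> t) / A t) (at t)"
proof -
  have "((\<lambda>t. ln (\<Psi> t)) has_real_derivative
      (2 * A t * (1/3 + \<epsilon> t / 2) * \<psi> t + (A t)\<^sup>2 * rhs_minus t (\<phi> t) (\<psi> t)) / \<Psi> t) (at t)"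
    unfolding \<Psi>_def[abs_def] using A_deriv_late[OF assms] \<psi>_deriv[OF late_bounds(1)[OF assms]]
      late_bounds[OF assms]
    by (auto intro!: derivative_eq_intros)
  moreover have "(2 * A t * (1/3 + \<epsilon> t / 2) * \<psi> t + (A t)\<^sup>2 * rhs_minus t (\<phi> t) (\<psi> t)) / \<Psi> t
      = (2 * (\<phi> t - 2/3) + \<epsilon> t) / A t"
    using late_bounds[OF assms] by (simp add: \<Psi>_def rhs_minus_def field_simps power2_eq_square)
  ultimately show ?thesis by simp
qed

lemma \<Phi>'_upper:
  assumes "t1 \<le> t"
  shows "\<Phi>' t \<le> 2 / (81 * (A t)\<^sup>2) + A t * (\<psi> t)\<^sup>2 / 3"
proof -
  note l = late_bounds[OF assms]
  have "\<epsilon> t * (2 * \<phi> t - 2/3) - (\<phi> t - 2/3)\<^sup>2 + (\<psi> t)\<^sup>2 * (1/3 - \<epsilon> t) \<le> \<epsilon> t * 2 + (\<psi> t)\<^sup>2 * (1/3)"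
  proof -
    have "\<epsilon> t * (2 * \<phi> t - 2/3) \<le> \<epsilon> t * 2" using l q_less_1 by (intro mult_left_mono) auto
    moreover have "(\<psi> t)\<^sup>2 * (1/3 - \<epsilon> t) \<le> (\<psi> t)\<^sup>2 * (1/3)" using l by (intro mult_left_mono) auto
    ultimately show ?thesis using zero_le_power2[of "\<phi> t - 2/3"] by linarith
  qed
  then have "\<Phi>' t \<le> A t * (\<epsilon> t * 2 + (\<psi> t)\<^sup>2 * (1/3))"
    unfolding \<Phi>'_def using l by (intro mult_left_mono) auto
  also have "\<dots> = 2 * (A t * \<epsilon> t) + A t * (\<psi> t)\<^sup>2 / 3" by (simp add: algebra_simps)
  also have "A t * \<epsilon> t \<le> 1 / (81 * (A t)\<^sup>2)"
  proof -
    have "A t * \<epsilon> t \<le> A t * (1 / (81 * A t ^ 3))" using l by (intro mult_left_mono) auto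
    also have "\<dots> = 1 / (81 * (A t)\<^sup>2)" using l by (simp add: power2_eq_square power3_eq_cube)
    finally show ?thesis .
  qed
  finally show ?thesis by simp
qed

lemma \<Phi>'_lower:
  assumes "t1 \<le> t"
  shows "- ((\<Phi> t)\<^sup>2 / A t ^ 3) \<le> \<Phi>' t"
proof -
  note l = late_bounds[OF assms]
  have "- (\<phi> t - 2/3)\<^sup>2 \<le> \<epsilon> t * (2 * \<phi> t - 2/3) - (\<phi> t - 2/3)\<^sup>2 + (\<psi> t)\<^sup>2 * (1/3 - \<epsilon> t)"
    using l by simp
  then have "A t * (- (\<phi> t - 2/3)\<^sup>2) \<le> \<Phi>' t"
    unfolding \<Phi>'_def using l by (intro mult_left_mono) auto
  moreover have "A t * (- (\<phi> t - 2/3)\<^sup>2) = - ((\<Phi> t)\<^sup>2 / A t ^ 3)"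
    using l by (simp add: \<Phi>_def field_simps power2_eq_square power3_eq_cube)
  ultimately show ?thesis by simp
qed

text \<open>The exponent \<open>\<beta>\<close> is chosen so that \<open>\<beta> \<le> 1 - q\<close> makes \<open>ln \<psi> + \<beta> ln A\<close> nonincreasing
  and \<open>\<beta> \<le> 1/2\<close> keeps the growth exponent \<open>1 - 2\<beta>\<close> of \<open>\<Phi>'\<close> nonnegative.\<close>

definition \<beta> :: real where "\<beta> = min (1/2) (1 - q)"

lemma \<beta>_bounds: "0 < \<beta>" "\<beta> \<le> 1/2" "\<beta> \<le> 1 - q"
  using q_less_1 by (auto simp: \<beta>_def min_def)

lemma \<psi>_decay:
  obtains C where "\<And>t. t1 \<le> t \<Longrightarrow> \<psi> t \<le> C * A t powr (- \<beta>)"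
proof -
  define W where "W t = ln (\<psi> t) + \<beta> * ln (A t)" for t
  have W_deriv: "(W has_real_derivative (2 * (\<phi> t - 1) + \<beta> * (1/3 + \<epsilon> t / 2)) / A t) (at t)"
    if "t1 \<le> t" for t
  proof -
    have "(W has_real_derivative rhs_minus t (\<phi> t) (\<psi> t) / \<psi> t + \<beta> * ((1/3 + \<epsilon> t / 2) / A t)) (at t)"
      unfolding W_def[abs_def] using \<psi>_deriv[OF late_bounds(1)[OF that]] late_bounds(3,9)[OF that]
        A_deriv_late[OF that]
      by (auto intro!: derivative_eq_intros)
    moreover have "rhs_minus t (\<phi> t) (\<psi> t) / \<psi> t + \<beta> * ((1/3 + \<epsilon> t / 2) / A t)
        = (2 * (\<phi> t - 1) + \<beta> * (1/3 + \<epsilon> t / 2)) / A t"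
      using late_bounds[OF that] by (simp add: rhs_minus_def field_simps)
    ultimately show ?thesis by simp
  qed
  have W_nonpos: "(2 * (\<phi> t - 1) + \<beta> * (1/3 + \<epsilon> t / 2)) / A t \<le> 0" if "t1 \<le> t" for t
  proof -
    have "\<beta> * (1/3 + \<epsilon> t / 2) \<le> (1 - q) * (1/2)"
      using \<beta>_bounds late_bounds[OF that] by (intro mult_mono) auto
    then have "2 * (\<phi> t - 1) + \<beta> * (1/3 + \<epsilon> t / 2) \<le> 0"
      using late_bounds(8)[OF that] q_less_1 by (simp add: field_simps)
    then show ?thesis using late_bounds(3)[OF that] by (simp add: divide_nonpos_pos)
  qed
  show ?thesis
  proof (rule that)
    fix t assume t: "t1 \<le> t"
    have "W t \<le> W t1" by (rule DERIV_nonpos_imp_antimono_ray[OF W_deriv W_nonpos order_refl t])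
    then have "exp (ln (\<psi> t)) \<le> exp (W t1 + (- \<beta>) * ln (A t))" by (simp add: W_def)
    also have "\<dots> = exp (W t1) * A t powr (- \<beta>)"
      using late_bounds(3)[OF t] by (simp add: exp_add[symmetric] powr_def)
    finally show "\<psi> t \<le> exp (W t1) * A t powr (- \<beta>)" using late_bounds(9)[OF t] by simp
  qed
qed

lemma \<Phi>'_le_powr:
  obtains c where "0 < c" "\<And>t. t1 \<le> t \<Longrightarrow> \<Phi>' t \<le> c * A t powr (1 - 2 * \<beta>)"
proof -
  obtain C where C: "\<And>t. t1 \<le> t \<Longrightarrow> \<psi> t \<le> C * A t powr (- \<beta>)" using \<psi>_decay by blast
  show ?thesis
  proof (rule that)
    show "0 < 2/81 + C\<^sup>2 / 3" by (simp add: add_pos_nonneg)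
    fix t assume t: "t1 \<le> t"
    note l = late_bounds[OF t]
    have P: "1 \<le> A t powr (1 - 2 * \<beta>)" using l \<beta>_bounds by (intro ge_one_powr_ge_zero) auto
    have "2 / (81 * (A t)\<^sup>2) \<le> 2/81" using l by (simp add: field_simps one_le_power)
    also have "\<dots> \<le> 2/81 * A t powr (1 - 2 * \<beta>)" using P by simp
    finally have "2 / (81 * (A t)\<^sup>2) \<le> 2/81 * A t powr (1 - 2 * \<beta>)" .
    moreover have "A t * (\<psi> t)\<^sup>2 \<le> C\<^sup>2 * A t powr (1 - 2 * \<beta>)"
    proof -
      have "(\<psi> t)\<^sup>2 \<le> (C * A t powr (- \<beta>))\<^sup>2" using C[OF t] l by (intro power_mono) auto
      then have "A t * (\<psi> t)\<^sup>2 \<le> A t * (C * A t powr (- \<beta>))\<^sup>2" using l by (intro mult_left_mono) auto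
      also have "\<dots> = C\<^sup>2 * (A t * (A t powr (- \<beta>))\<^sup>2)"
        by (simp add: power2_eq_square algebra_simps)
      also have "A t * (A t powr (- \<beta>))\<^sup>2 = A t powr (1 - 2 * \<beta>)"
      proof -
        have "A t powr (1 - 2 * \<beta>) = A t powr 1 * A t powr (- \<beta>) * A t powr (- \<beta>)"
          by (simp only: powr_add[symmetric]) simp
        then show ?thesis using l by (simp add: power2_eq_square)
      qed
      finally show ?thesis .
    qed
    ultimately show "\<Phi>' t \<le> (2/81 + C\<^sup>2 / 3) * A t powr (1 - 2 * \<beta>)"
      using \<Phi>'_upper[OF t] by (simp add: field_simps)
  qed
qed

lemma \<Phi>_sublinear:
  obtains C where "0 < C" "\<And>t. t1 \<le> t \<Longrightarrow> \<Phi> t \<le> C * A t powr (2 - 2 * \<beta>)"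
proof -
  obtain c where c: "0 < c" "\<And>t. t1 \<le> t \<Longrightarrow> \<Phi>' t \<le> c * A t powr (1 - 2 * \<beta>)"
    using \<Phi>'_le_powr by blast
  define W where "W t = \<Phi> t - 3 * c * A t powr (2 - 2 * \<beta>)" for t
  have W_deriv: "(W has_real_derivative \<Phi>' t - 3 * c * ((2 - 2 * \<beta>) * A t powr (1 - 2 * \<beta>) * (1/3 + \<epsilon> t / 2))) (at t)"
    if "t1 \<le> t" for t
    unfolding W_def[abs_def]
    by (rule DERIV_cong[OF DERIV_diff[OF \<Phi>_deriv[OF that] DERIV_cmult[OF A_powr_deriv[OF that]]]]) simp
  have W_nonpos: "\<Phi>' t - 3 * c * ((2 - 2 * \<beta>) * A t powr (1 - 2 * \<beta>) * (1/3 + \<epsilon> t / 2)) \<le> 0"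
    if "t1 \<le> t" for t
  proof -
    have "1 * (1/3) \<le> (2 - 2 * \<beta>) * (1/3 + \<epsilon> t / 2)"
      using late_bounds[OF that] \<beta>_bounds by (intro mult_mono) auto
    then have "3 * c * (A t powr (1 - 2 * \<beta>) * (1/3))
        \<le> 3 * c * (A t powr (1 - 2 * \<beta>) * ((2 - 2 * \<beta>) * (1/3 + \<epsilon> t / 2)))"
      using c by (intro mult_left_mono) auto
    then show ?thesis using c(2)[OF that] by (simp add: algebra_simps)
  qed
  show ?thesis
  proof (rule that)
    show "0 < \<bar>W t1\<bar> + 3 * c" using c by simp
    fix t assume t: "t1 \<le> t"
    have "W t \<le> W t1" by (rule DERIV_nonpos_imp_antimono_ray[OF W_deriv W_nonpos order_refl t])
    moreover have "W t1 \<le> \<bar>W t1\<bar> * A t powr (2 - 2 * \<beta>)"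
    proof -
      have "1 \<le> A t powr (2 - 2 * \<beta>)"
        using late_bounds[OF t] \<beta>_bounds by (intro ge_one_powr_ge_zero) auto
      then have "\<bar>W t1\<bar> * 1 \<le> \<bar>W t1\<bar> * A t powr (2 - 2 * \<beta>)" by (intro mult_left_mono) auto
      then show ?thesis by linarith
    qed
    ultimately show "\<Phi> t \<le> (\<bar>W t1\<bar> + 3 * c) * A t powr (2 - 2 * \<beta>)"
      unfolding W_def by (simp add: algebra_simps)
  qed
qed

lemma ln_\<Psi>_rate_le_powr:
  obtains c where "0 < c" "\<And>t. t1 \<le> t \<Longrightarrow> (2 * (\<phi> t - 2/3) + \<epsilon> t) / A t \<le> c * A t powr (- 2 * \<beta> - 1)"
proof -
  obtain C where C: "0 < C" "\<And>t. t1 \<le> t \<Longrightarrow> \<Phi> t \<le> C * A t powr (2 - 2 * \<beta>)"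
    using \<Phi>_sublinear by blast
  show ?thesis
  proof (rule that)
    show "0 < 2 * C + 1/81" using C by simp
    fix t assume t: "t1 \<le> t"
    note l = late_bounds[OF t]
    have "\<phi> t - 2/3 \<le> C * A t powr (- 2 * \<beta>)"
    proof -
      have "A t powr (2 - 2 * \<beta>) = A t powr 2 * A t powr (- 2 * \<beta>)"
        by (simp only: powr_add[symmetric]) simp
      then have "A t powr (2 - 2 * \<beta>) = (A t)\<^sup>2 * A t powr (- 2 * \<beta>)"
        using l by simp
      then have "(A t)\<^sup>2 * (\<phi> t - 2/3) \<le> (A t)\<^sup>2 * (C * A t powr (- 2 * \<beta>))"
        using C(2)[OF t] by (simp add: \<Phi>_def mult_ac)
      then show ?thesis using l by simp
    qed
    moreover have "\<epsilon> t \<le> 1/81 * A t powr (- 2 * \<beta>)"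
    proof -
      have "A t powr (-3) = 1 / A t ^ 3" using l by (simp only: powr_minus_divide powr_numeral)
      then have "\<epsilon> t \<le> 1/81 * A t powr (-3)" using l by simp
      also have "\<dots> \<le> 1/81 * A t powr (- 2 * \<beta>)" using l \<beta>_bounds by (intro mult_left_mono powr_mono) auto
      finally show ?thesis .
    qed
    ultimately have "2 * (\<phi> t - 2/3) + \<epsilon> t \<le> (2 * C + 1/81) * A t powr (- 2 * \<beta>)"
      by (simp add: algebra_simps)
    then have "(2 * (\<phi> t - 2/3) + \<epsilon> t) / A t \<le> (2 * C + 1/81) * A t powr (- 2 * \<beta>) / A t"
      using l by (simp add: divide_right_mono)
    also have "\<dots> = (2 * C + 1/81) * A t powr (- 2 * \<beta> - 1)"
      using l by (simp add: powr_diff)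
    finally show "(2 * (\<phi> t - 2/3) + \<epsilon> t) / A t \<le> (2 * C + 1/81) * A t powr (- 2 * \<beta> - 1)" .
  qed
qed

lemma \<Psi>_bounded:
  obtains C where "\<And>t. t1 \<le> t \<Longrightarrow> \<Psi> t \<le> C"
proof -
  obtain c where c: "0 < c" "\<And>t. t1 \<le> t \<Longrightarrow> (2 * (\<phi> t - 2/3) + \<epsilon> t) / A t \<le> c * A t powr (- 2 * \<beta> - 1)"
    using ln_\<Psi>_rate_le_powr by blast
  define K where "K = 3 * c / (2 * \<beta>)"
  have K: "0 \<le> K" using c \<beta>_bounds by (simp add: K_def)
  define W where "W t = ln (\<Psi> t) + K * A t powr (- 2 * \<beta>)" for t
  have W_deriv: "(W has_real_derivative
      (2 * (\<phi> t - 2/3) + \<epsilon> t) / A t + K * (- 2 * \<beta> * A t powr (- 2 * \<beta> - 1) * (1/3 + \<epsilon> t / 2))) (at t)"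
    if "t1 \<le> t" for t
    unfolding W_def[abs_def] by (rule DERIV_add[OF ln_\<Psi>_deriv[OF that] DERIV_cmult[OF A_powr_deriv[OF that]]])
  have W_nonpos: "(2 * (\<phi> t - 2/3) + \<epsilon> t) / A t + K * (- 2 * \<beta> * A t powr (- 2 * \<beta> - 1) * (1/3 + \<epsilon> t / 2)) \<le> 0"
    if "t1 \<le> t" for t
  proof -
    have "c * A t powr (- 2 * \<beta> - 1) = K * (2 * \<beta> * A t powr (- 2 * \<beta> - 1) * (1/3))"
      using \<beta>_bounds by (simp add: K_def)
    also have "\<dots> \<le> K * (2 * \<beta> * A t powr (- 2 * \<beta> - 1) * (1/3 + \<epsilon> t / 2))"
      using K \<beta>_bounds late_bounds[OF that] by (intro mult_left_mono) auto
    finally show ?thesis using c(2)[OF that] by simp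
  qed
  show ?thesis
  proof (rule that)
    fix t assume t: "t1 \<le> t"
    have "W t \<le> W t1" by (rule DERIV_nonpos_imp_antimono_ray[OF W_deriv W_nonpos order_refl t])
    moreover have "0 \<le> K * A t powr (- 2 * \<beta>)" using K by simp
    ultimately have "ln (\<Psi> t) \<le> W t1" unfolding W_def by linarith
    then have "exp (ln (\<Psi> t)) \<le> exp (W t1)" by simp
    then show "\<Psi> t \<le> exp (W t1)" using \<Psi>_pos[OF t] by simp
  qed
qed

lemma \<Phi>'_le_inverse_square:
  obtains c where "0 < c" "\<And>t. t1 \<le> t \<Longrightarrow> \<Phi>' t \<le> c / (A t)\<^sup>2"
proof -
  obtain C where C: "\<And>t. t1 \<le> t \<Longrightarrow> \<Psi> t \<le> C" using \<Psi>_bounded by blast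
  show ?thesis
  proof (rule that)
    show "0 < 2/81 + C\<^sup>2 / 3" by (simp add: add_pos_nonneg)
    fix t assume t: "t1 \<le> t"
    note l = late_bounds[OF t]
    have "A t * (\<psi> t)\<^sup>2 = (\<Psi> t)\<^sup>2 / A t ^ 3"
      using l by (simp add: \<Psi>_def field_simps power2_eq_square power3_eq_cube)
    also have "\<dots> \<le> C\<^sup>2 / (A t)\<^sup>2"
    proof -
      have "(\<Psi> t)\<^sup>2 \<le> C\<^sup>2" using C[OF t] \<Psi>_pos[OF t] by (intro power_mono) auto
      moreover have "(A t)\<^sup>2 \<le> A t ^ 3" using l by (simp add: power2_eq_square power3_eq_cube)
      ultimately show ?thesis using l by (intro frac_le) auto
    qed
    finally have "A t * (\<psi> t)\<^sup>2 / 3 \<le> C\<^sup>2 / 3 / (A t)\<^sup>2" by simp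
    then show "\<Phi>' t \<le> (2/81 + C\<^sup>2 / 3) / (A t)\<^sup>2"
      using \<Phi>'_upper[OF t] by (simp add: add_divide_distrib)
  qed
qed

lemma \<Phi>_bounded:
  obtains C where "0 < C" "\<And>t. t1 \<le> t \<Longrightarrow> \<Phi> t \<le> C"
proof -
  obtain c where c: "0 < c" "\<And>t. t1 \<le> t \<Longrightarrow> \<Phi>' t \<le> c / (A t)\<^sup>2" using \<Phi>'_le_inverse_square by blast
  define W where "W t = \<Phi> t + 3 * c / A t" for t
  have W_deriv: "(W has_real_derivative \<Phi>' t - 3 * c * (1/3 + \<epsilon> t / 2) / (A t)\<^sup>2) (at t)"
    if "t1 \<le> t" for t
    using DERIV_add[OF \<Phi>_deriv[OF that] inverse_A_power_deriv[OF that, of "3 * c" 1]]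
    by (simp add: W_def[abs_def] power2_eq_square)
  have W_nonpos: "\<Phi>' t - 3 * c * (1/3 + \<epsilon> t / 2) / (A t)\<^sup>2 \<le> 0" if "t1 \<le> t" for t
  proof -
    have "c * 1 \<le> c * (3 * (1/3 + \<epsilon> t / 2))" using c late_bounds[OF that] by (intro mult_left_mono) auto
    then have "c / (A t)\<^sup>2 \<le> 3 * c * (1/3 + \<epsilon> t / 2) / (A t)\<^sup>2"
      by (intro divide_right_mono) (auto simp: algebra_simps)
    then show ?thesis using c(2)[OF that] by simp
  qed
  show ?thesis
  proof (rule that)
    show "0 < \<bar>W t1\<bar> + 1" by simp
    fix t assume t: "t1 \<le> t"
    have "W t \<le> W t1" by (rule DERIV_nonpos_imp_antimono_ray[OF W_deriv W_nonpos order_refl t])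
    moreover have "0 \<le> 3 * c / A t" using c late_bounds[OF t] by simp
    ultimately show "\<Phi> t \<le> \<bar>W t1\<bar> + 1" unfolding W_def by linarith
  qed
qed

lemma \<Phi>'_abs_bounded:
  obtains c where "\<And>t. t1 \<le> t \<Longrightarrow> \<bar>\<Phi>' t\<bar> \<le> c / (A t)\<^sup>2"
proof -
  obtain c where c: "0 < c" "\<And>t. t1 \<le> t \<Longrightarrow> \<Phi>' t \<le> c / (A t)\<^sup>2" using \<Phi>'_le_inverse_square by blast
  obtain C where C: "0 < C" "\<And>t. t1 \<le> t \<Longrightarrow> \<Phi> t \<le> C" using \<Phi>_bounded by blast
  show ?thesis
  proof (rule that)
    fix t assume t: "t1 \<le> t"
    note l = late_bounds[OF t]
    have "(\<Phi> t)\<^sup>2 / A t ^ 3 \<le> C\<^sup>2 / (A t)\<^sup>2"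
    proof -
      have "(\<Phi> t)\<^sup>2 \<le> C\<^sup>2" using C(2)[OF t] \<Phi>_pos[OF t] by (intro power_mono) auto
      moreover have "(A t)\<^sup>2 \<le> A t ^ 3" using l by (simp add: power2_eq_square power3_eq_cube)
      ultimately show ?thesis using l by (intro frac_le) auto
    qed
    moreover have "0 \<le> c / (A t)\<^sup>2" "0 \<le> C\<^sup>2 / (A t)\<^sup>2" using c by simp_all
    ultimately have "- \<Phi>' t \<le> c / (A t)\<^sup>2 + C\<^sup>2 / (A t)\<^sup>2" "\<Phi>' t \<le> c / (A t)\<^sup>2 + C\<^sup>2 / (A t)\<^sup>2"
      using \<Phi>'_lower[OF t] c(2)[OF t] by linarith+
    then have "\<bar>\<Phi>' t\<bar> \<le> c / (A t)\<^sup>2 + C\<^sup>2 / (A t)\<^sup>2" by (simp only: abs_le_iff)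
    then show "\<bar>\<Phi>' t\<bar> \<le> (c + C\<^sup>2) / (A t)\<^sup>2" by (simp add: add_divide_distrib)
  qed
qed

lemma \<Phi>_lower_bound:
  obtains c where "0 < c" "\<And>t. t1 \<le> t \<Longrightarrow> c \<le> \<Phi> t"
proof -
  obtain C where C: "0 < C" "\<And>t. t1 \<le> t \<Longrightarrow> \<Phi> t \<le> C" using \<Phi>_bounded by blast
  define L where "L = - (3 * C / 2)"
  define W where "W t = ln (\<Phi> t) + L / A t ^ 2" for t
  have W_deriv: "(W has_real_derivative \<Phi>' t / \<Phi> t - 2 * L * (1/3 + \<epsilon> t / 2) / A t ^ 3) (at t)"
    if "t1 \<le> t" for t
    using DERIV_add[OF DERIV_chain2[OF DERIV_ln_divide[OF \<Phi>_pos[OF that]] \<Phi>_deriv[OF that]]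
        inverse_A_power_deriv[OF that, of L 2]]
    by (simp add: W_def[abs_def])
  have W_nonneg: "0 \<le> \<Phi>' t / \<Phi> t - 2 * L * (1/3 + \<epsilon> t / 2) / A t ^ 3" if "t1 \<le> t" for t
  proof -
    note l = late_bounds[OF that]
    have "- (C / A t ^ 3) \<le> - (\<Phi> t / A t ^ 3)"
      using C(2)[OF that] l by (simp add: divide_right_mono)
    also have "- (\<Phi> t / A t ^ 3) = 1 / \<Phi> t * (- ((\<Phi> t)\<^sup>2 / A t ^ 3))"
      using \<Phi>_pos[OF that] by (simp add: power2_eq_square)
    also have "\<dots> \<le> 1 / \<Phi> t * \<Phi>' t"
      using \<Phi>'_lower[OF that] \<Phi>_pos[OF that] by (intro mult_left_mono) auto
    finally have "- (C / A t ^ 3) \<le> \<Phi>' t / \<Phi> t" by simp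
    moreover have "C / A t ^ 3 \<le> - (2 * L * (1/3 + \<epsilon> t / 2) / A t ^ 3)"
    proof -
      have "C * 1 \<le> C * (3 * (1/3 + \<epsilon> t / 2))" using C l by (intro mult_left_mono) auto
      then have "C / A t ^ 3 \<le> C * (3 * (1/3 + \<epsilon> t / 2)) / A t ^ 3"
        using l by (intro divide_right_mono) auto
      then show ?thesis using l by (simp add: L_def field_simps)
    qed
    ultimately show ?thesis by linarith
  qed
  show ?thesis
  proof (rule that)
    show "0 < exp (ln (\<Phi> t1) + L)" by simp
    fix t assume t: "t1 \<le> t"
    have "W t1 \<le> W t" by (rule DERIV_nonneg_imp_mono_ray[OF W_deriv W_nonneg order_refl t])
    moreover have "L \<le> L / A t1 ^ 2"
      using late_bounds[OF order_refl] C unfolding L_def by (simp add: field_simps one_le_power)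
    moreover have "L / A t ^ 2 \<le> 0" using C unfolding L_def by (simp add: divide_nonpos_pos)
    ultimately have "ln (\<Phi> t1) + L \<le> ln (\<Phi> t)" unfolding W_def by linarith
    then show "exp (ln (\<Phi> t1) + L) \<le> \<Phi> t" using \<Phi>_pos[OF t] by (metis exp_le_cancel_iff exp_ln)
  qed
qed

lemma \<Phi>_limit:
  obtains M K where "0 < M" "\<And>t. t1 \<le> t \<Longrightarrow> \<bar>\<Phi> t - M\<bar> \<le> K / A t"
proof -
  obtain c where c: "\<And>t. t1 \<le> t \<Longrightarrow> \<bar>\<Phi>' t\<bar> \<le> c / (A t)\<^sup>2" using \<Phi>'_abs_bounded by blast
  have c': "\<bar>\<Phi>' t\<bar> \<le> c / A t ^ Suc 1" if "t1 \<le> t" for t using c[OF that] by (simp add: power2_eq_square)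
  obtain M where M: "\<And>t. t1 \<le> t \<Longrightarrow> \<bar>\<Phi> t - M\<bar> \<le> 3 * c / real 1 / A t ^ 1"
    using converges_at_inverse_power_rate[OF _ \<Phi>_deriv c'] by auto
  obtain c0 where c0: "0 < c0" "\<And>t. t1 \<le> t \<Longrightarrow> c0 \<le> \<Phi> t" using \<Phi>_lower_bound by blast
  have "0 \<le> 3 * c / A t1" using M[of t1] by simp
  then have c_nonneg: "0 \<le> c" using late_bounds(3)[of t1] by (simp add: zero_le_divide_iff)
  define t' where "t' = t1 + 18 * c / c0"
  have t': "t1 \<le> t'" using c_nonneg c0 by (simp add: t'_def)
  have "A t1 + (t' - t1) / 3 \<le> A t'"
    using A_growth[of t1 t'] t' t0_pos by (simp add: t1_def)
  then have "6 * c / c0 \<le> A t'" using late_bounds(3)[of t1] by (simp add: t'_def)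
  then have "3 * c / A t' \<le> c0 / 2" using c_nonneg c0 late_bounds[OF t'] by (simp add: field_simps)
  then have "0 < M" using M[OF t'] c0(2)[OF t'] c0(1) by (simp add: abs_le_iff)
  moreover have "\<bar>\<Phi> t - M\<bar> \<le> 3 * c / A t" if "t1 \<le> t" for t using M[OF that] by simp
  ultimately show ?thesis by (rule that)
qed

lemma \<Psi>_limit:
  obtains N K where "0 < N" "\<And>t. t1 \<le> t \<Longrightarrow> \<bar>\<Psi> t - N\<bar> \<le> K / A t"
proof -
  obtain C where C: "0 < C" "\<And>t. t1 \<le> t \<Longrightarrow> \<Phi> t \<le> C" using \<Phi>_bounded by blast
  have rate: "\<bar>(2 * (\<phi> t - 2/3) + \<epsilon> t) / A t\<bar> \<le> (2 * C + 1/81) / A t ^ Suc 2" if "t1 \<le> t" for t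
  proof -
    note l = late_bounds[OF that]
    have "2 * (\<phi> t - 2/3) \<le> 2 * C / (A t)\<^sup>2"
      using C(2)[OF that] l by (simp add: \<Phi>_def field_simps)
    moreover have "\<epsilon> t \<le> 1/81 / (A t)\<^sup>2"
    proof -
      have "(A t)\<^sup>2 \<le> A t ^ 3" using l by (simp add: power2_eq_square power3_eq_cube)
      then have "1 / (81 * A t ^ 3) \<le> 1/81 / (A t)\<^sup>2" using l by (simp add: frac_le)
      then show ?thesis using l by linarith
    qed
    ultimately have "2 * (\<phi> t - 2/3) + \<epsilon> t \<le> (2 * C + 1/81) / (A t)\<^sup>2"
      by (simp add: add_divide_distrib)
    then have "(2 * (\<phi> t - 2/3) + \<epsilon> t) / A t \<le> (2 * C + 1/81) / (A t)\<^sup>2 / A t"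
      by (rule divide_right_mono) (use l in simp)
    moreover have nonneg: "0 \<le> (2 * (\<phi> t - 2/3) + \<epsilon> t) / A t" using l by simp
    ultimately show ?thesis unfolding abs_of_nonneg[OF nonneg] by (simp add: power2_eq_square power3_eq_cube)
  qed
  define c where "c = 2 * C + 1/81"
  obtain L where L: "\<And>t. t1 \<le> t \<Longrightarrow> \<bar>ln (\<Psi> t) - L\<bar> \<le> 3 * c / real 2 / A t ^ 2"
    using converges_at_inverse_power_rate[OF _ ln_\<Psi>_deriv rate] unfolding c_def by auto
  show ?thesis
  proof (rule that)
    show "0 < exp L" by simp
    fix t assume t: "t1 \<le> t"
    note l = late_bounds[OF t]
    have c: "0 \<le> c" using C by (simp add: c_def)
    have "3 * c / 2 / A t ^ 2 \<le> 3 * c / 2 / A t"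
      using c l by (intro divide_left_mono) (auto simp: power2_eq_square)
    moreover have "3 * c / 2 / A t \<le> 3 * c / 2"
      using divide_left_mono[of 1 "A t" "3 * c / 2"] c l by simp
    ultimately have dist: "\<bar>ln (\<Psi> t) - L\<bar> \<le> 3 * c / 2 / A t" "ln (\<Psi> t) \<le> L + 3 * c / 2"
      using L[OF t] by (auto simp: abs_le_iff)
    have "\<bar>\<Psi> t - exp L\<bar> = \<bar>exp (ln (\<Psi> t)) - exp L\<bar>" using \<Psi>_pos[OF t] by simp
    also have "\<dots> \<le> exp (max (ln (\<Psi> t)) L) * \<bar>ln (\<Psi> t) - L\<bar>" by (rule abs_exp_sub_exp_le)
    also have "\<dots> \<le> exp (L + 3 * c / 2) * (3 * c / 2 / A t)"
      using dist c by (intro mult_mono) auto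
    finally show "\<bar>\<Psi> t - exp L\<bar> \<le> exp (L + 3 * c / 2) * (3 * c / 2) / A t" by simp
  qed
qed

lemma expansions_at_infinity:
  "\<exists>\<mu> \<nu> :: real. \<mu> \<noteq> 0 \<and> \<nu> \<noteq> 0 \<and>
     (\<lambda>t. \<phi> t - 2/3 - \<mu> / t\<^sup>2) \<in> O[at_top](\<lambda>t. 1 / t ^ 3) \<and>
     (\<lambda>t. \<psi> t - \<nu> / t\<^sup>2) \<in> O[at_top](\<lambda>t. 1 / t ^ 3)"
proof -
  obtain D where D: "\<And>t. t1 \<le> t \<Longrightarrow> \<bar>t - 3 * A t\<bar> \<le> D" using A_nearly_linear by blast
  obtain M KM where M: "0 < M" "\<And>t. t1 \<le> t \<Longrightarrow> \<bar>\<Phi> t - M\<bar> \<le> KM / A t" using \<Phi>_limit by blast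
  obtain N KN where N: "0 < N" "\<And>t. t1 \<le> t \<Longrightarrow> \<bar>\<Psi> t - N\<bar> \<le> KN / A t" using \<Psi>_limit by blast
  have "(\<lambda>t. (\<phi> t - 2/3) - 9 * M / t\<^sup>2) \<in> O[at_top](\<lambda>t. 1 / t ^ 3)"
    by (rule inverse_square_expansion[OF D M(2)[unfolded \<Phi>_def]])
  moreover have "(\<lambda>t. \<psi> t - 9 * N / t\<^sup>2) \<in> O[at_top](\<lambda>t. 1 / t ^ 3)"
    by (rule inverse_square_expansion[OF D N(2)[unfolded \<Psi>_def]])
  ultimately show ?thesis using M(1) N(1) by (intro exI[of _ "9 * M"] exI[of _ "9 * N"]) auto
qed

end

section \<open>The Bryant--Salamon coefficients\<close>

lemma bryant_salamon_algebra:
  fixes \<rho> a b :: real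
  assumes "1 < \<rho>" and a: "a = \<rho> / 3 * sqrt (1 - \<rho> powr (-3))" and b: "b = \<rho> / sqrt 3"
  shows "0 < a" "0 < b" "1/3 - a\<^sup>2 / b\<^sup>2 = 1 / (3 * \<rho> ^ 3)" "a \<le> \<rho> / 3"
proof -
  have s: "0 < 1 - 1 / \<rho> ^ 3" "1 - 1 / \<rho> ^ 3 \<le> 1" using \<open>1 < \<rho>\<close> by (simp_all add: one_less_power)
  have a': "a = \<rho> / 3 * sqrt (1 - 1 / \<rho> ^ 3)"
    using a \<open>1 < \<rho>\<close> by (simp add: powr_minus_divide powr_numeral)
  show "0 < a" "0 < b" using \<open>1 < \<rho>\<close> s by (simp_all add: a' b)
  have "a\<^sup>2 / b\<^sup>2 = (1 - 1 / \<rho> ^ 3) / 3"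
    using \<open>1 < \<rho>\<close> s by (simp add: a' b power_mult_distrib power_divide field_simps)
  then show "1/3 - a\<^sup>2 / b\<^sup>2 = 1 / (3 * \<rho> ^ 3)" by (simp add: field_simps)
  show "a \<le> \<rho> / 3" using \<open>1 < \<rho>\<close> s by (simp add: a' mult_left_le)
qed

locale bryant_salamon =
  fixes r A B :: "real \<Rightarrow> real"
  assumes r_gt1: "\<forall>t>0. r t > 1"
    and A_def: "\<forall>t>0. A t = r t / 3 * sqrt (1 - r t powr (-3))"
    and B_def: "\<forall>t>0. B t = r t / sqrt 3"
    and A_ode: "\<forall>t>0. (A has_real_derivative (1/2) * (1 - (A t)\<^sup>2 / (B t)\<^sup>2)) (at t)"
    and B_ode: "\<forall>t>0. (B has_real_derivative A t / B t) (at t)"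
begin

lemma coefficients_at:
  assumes "0 < t"
  shows "0 < A t" "0 < B t" "1/3 - (A t)\<^sup>2 / (B t)\<^sup>2 = 1 / (3 * r t ^ 3)" "A t \<le> r t / 3"
proof -
  have "1 < r t" "A t = r t / 3 * sqrt (1 - r t powr (-3))" "B t = r t / sqrt 3"
    using assms r_gt1 A_def B_def by auto
  from bryant_salamon_algebra[OF this]
  show "0 < A t" "0 < B t" "1/3 - (A t)\<^sup>2 / (B t)\<^sup>2 = 1 / (3 * r t ^ 3)" "A t \<le> r t / 3" .
qed

lemma r_mono:
  assumes "0 < s" "s \<le> t"
  shows "r s \<le> r t"
proof -
  have "B s \<le> B t"
  proof (rule DERIV_nonneg_imp_nondecreasing[OF assms(2)])
    fix x assume "s \<le> x" "x \<le> t"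
    then have "0 < x" using assms by simp
    then show "\<exists>y. (B has_real_derivative y) (at x) \<and> 0 \<le> y"
      using B_ode coefficients_at[of x] by (intro exI[of _ "A x / B x"]) auto
  qed
  then show ?thesis using B_def assms by (simp add: divide_le_cancel)
qed

sublocale instanton_coefficients A "\<lambda>t. 1/3 - (A t)\<^sup>2 / (B t)\<^sup>2"
proof
  fix t :: real assume t: "0 < t"
  have r: "1 < r t" using r_gt1 t by simp
  note c = coefficients_at[OF t]
  show "0 < A t" by (fact c(1))
  have "(1/2) * (1 - (A t)\<^sup>2 / (B t)\<^sup>2) = 1/3 + (1/3 - (A t)\<^sup>2 / (B t)\<^sup>2) / 2"
    by (simp add: field_simps)
  then show "(A has_real_derivative 1/3 + (1/3 - (A t)\<^sup>2 / (B t)\<^sup>2) / 2) (at t)"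
    using A_ode t by metis
  show "0 < 1/3 - (A t)\<^sup>2 / (B t)\<^sup>2" "1/3 - (A t)\<^sup>2 / (B t)\<^sup>2 < 1/3"
    using c r by (simp_all add: one_less_power)
  have "A t ^ 3 \<le> (r t / 3) ^ 3" using c by (intro power_mono) auto
  then have "1 / (3 * r t ^ 3) \<le> 1 / (81 * A t ^ 3)"
    using c by (intro frac_le) (auto simp: power_divide)
  then show "1/3 - (A t)\<^sup>2 / (B t)\<^sup>2 \<le> 1 / (81 * A t ^ 3)" using c by simp
next
  fix s t :: real assume st: "0 < s" "s \<le> t"
  have "1 < r s" using r_gt1 st by blast
  then have "1 / (3 * r t ^ 3) \<le> 1 / (3 * r s ^ 3)"
    using r_mono[OF st] by (intro frac_le power_mono) auto
  then show "1/3 - (A t)\<^sup>2 / (B t)\<^sup>2 \<le> 1/3 - (A s)\<^sup>2 / (B s)\<^sup>2"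
    using coefficients_at st by simp
next
  have "continuous_on {0<..} A"
    by (rule continuous_at_imp_continuous_on) (use A_ode in \<open>blast intro: DERIV_isCont\<close>)
  moreover have "continuous_on {0<..} B"
    by (rule continuous_at_imp_continuous_on) (use B_ode in \<open>blast intro: DERIV_isCont\<close>)
  moreover have "B t \<noteq> 0" if "t \<in> {0<..}" for t using coefficients_at[of t] that by auto
  ultimately show "continuous_on {0<..} (\<lambda>t. 1/3 - (A t)\<^sup>2 / (B t)\<^sup>2)"
    by (intro continuous_intros) auto
qed

lemma instanton_sol_iff_solves_on:
  assumes "I \<subseteq> {0<..}"
  shows "instanton_sol A B f g I \<longleftrightarrow> solves_on I f g"
proof -
  have "fplus_rhs (A t) (B t) u v = rhs_plus t u v" "fminus_rhs (A t) (B t) u v = rhs_minus t u v"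
    if "t \<in> I" for t u v
    unfolding rhs_plus_def rhs_minus_def using coefficients_at(1,2)[of t] that assms
    by (auto simp: fplus_rhs_def fminus_rhs_def field_simps power2_eq_square)
  then show ?thesis by (simp add: instanton_sol_def solves_on_def)
qed

end

theorem mainTheorem5:
  fixes r A B :: "real \<Rightarrow> real" and t0 p m :: real
  assumes r_gt1: "\<forall>t>0. r t > 1"
    and r_lim: "(r \<longlongrightarrow> 1) (at_right 0)"
    and A_def: "\<forall>t>0. A t = r t / 3 * sqrt (1 - r t powr (-3))"
    and B_def: "\<forall>t>0. B t = r t / sqrt 3"
    and A_ode: "\<forall>t>0. (A has_real_derivative (1/2) * (1 - (A t)\<^sup>2 / (B t)\<^sup>2)) (at t)"
    and B_ode: "\<forall>t>0. (B has_real_derivative A t / B t) (at t)"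
    and t0_pos: "t0 > 0"
    and R0: "2/3 < p" "p < 1" "0 < m" "m < 1"
  shows "\<exists>fp fm :: real \<Rightarrow> real.
           fp t0 = p \<and> fm t0 = m \<and>
           instanton_sol A B fp fm {t0..} \<and>
           (\<forall>gp gm T. t0 < T \<longrightarrow> gp t0 = p \<longrightarrow> gm t0 = m \<longrightarrow>
               instanton_sol A B gp gm {t0..<T} \<longrightarrow>
               (\<forall>t\<in>{t0..<T}. gp t = fp t \<and> gm t = fm t)) \<and>
           (fp \<longlongrightarrow> 2/3) at_top \<and> (fm \<longlongrightarrow> 0) at_top \<and>
           (\<exists>\<mu> \<nu> :: real. \<mu> \<noteq> 0 \<and> \<nu> \<noteq> 0 \<and>
              (\<lambda>t. fp t - 2/3 - \<mu> / t\<^sup>2) \<in> O[at_top](\<lambda>t. 1 / t ^ 3) \<and>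
              (\<lambda>t. fm t - \<nu> / t\<^sup>2) \<in> O[at_top](\<lambda>t. 1 / t ^ 3))"
proof -
  interpret bryant_salamon r A B
    using r_gt1 A_def B_def A_ode B_ode by unfold_locales
  have sol_iff: "instanton_sol A B f g I \<longleftrightarrow> solves_on I f g" if "I \<subseteq> {t0..}" for f g I
    using that t0_pos by (intro instanton_sol_iff_solves_on) auto
  obtain \<phi> \<psi> q where start: "\<phi> t0 = p" "\<psi> t0 = m" and sol: "solves_on {t0..} \<phi> \<psi>"
    and "trapped_solution A (\<lambda>t. 1/3 - (A t)\<^sup>2 / (B t)\<^sup>2) t0 q \<phi> \<psi>"
    using exists_trapped_solution[OF t0_pos R0] by blast
  then interpret trapped_solution A "\<lambda>t. 1/3 - (A t)\<^sup>2 / (B t)\<^sup>2" t0 q \<phi> \<psi> by simp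
  obtain \<mu> \<nu> where \<mu>\<nu>: "\<mu> \<noteq> 0" "\<nu> \<noteq> 0"
    "(\<lambda>t. \<phi> t - 2/3 - \<mu> / t\<^sup>2) \<in> O[at_top](\<lambda>t. 1 / t ^ 3)" "(\<lambda>t. \<psi> t - \<nu> / t\<^sup>2) \<in> O[at_top](\<lambda>t. 1 / t ^ 3)"
    using expansions_at_infinity by blast
  have "gp t = \<phi> t \<and> gm t = \<psi> t"
    if "gp t0 = p" "gm t0 = m" "instanton_sol A B gp gm {t0..<T}" "t \<in> {t0..<T}" for gp gm T t
  proof (rule instanton_solution_unique[OF t0_pos _ _ _ _ sol])
    have "{t0..<T} \<subseteq> {t0..}" by auto
    then show "solves_on {t0..<T} gp gm" using that(3) sol_iff by blast
  qed (use that start in auto)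
  moreover have "(\<phi> \<longlongrightarrow> 2/3) at_top" by (rule tendsto_of_expansion[OF \<mu>\<nu>(3)])
  moreover have "(\<psi> \<longlongrightarrow> 0) at_top" by (rule tendsto_of_expansion[where \<mu>=\<nu>]) (use \<mu>\<nu>(4) in simp)
  ultimately show ?thesis using start sol sol_iff \<mu>\<nu> by blast
qed

end
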